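(* Let $R\subseteq S$, $\sigma$ be as in the context, and $n=n_1+\cdots+n_\ell$. Let $\mathbf{a}=(a_1,\ldots,a_\ell)\in(S^* )^\ell$ and $\beta_{i,j}\in S$ ($1\le i\le\ell$, $1\le j\le n_i$) satisfy: (i) $a_i-a_j^\beta\in S^*$ for all $\beta\in S^*$ and $1\le i<j\le\ell$; (ii) for each $i$, $\beta_{i,1},\ldots,\beta_{i,n_i}$ are $R$-linearly independent. Then the $n\times n$ matrix $M_n(\mathbf{a},\boldsymbol\beta)$ over $S$, whose rows are indexed by $s=0,1,\ldots,n-1$, whose columns are indexed by the pairs $(i,j)$ in the order $(1,1),\ldots,(1,n_1),\ldots,(\ell,1),\ldots,(\ell,n_\ell)$, and whose $(s,(i,j))$ entry is $\mathcal{D}_{a_i}^s(\beta_{i,j})$, is invertible.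
   Context: $R$ is a finite commutative chain ring with maximal ideal $\mathfrak{m}$, $q=|R/\mathfrak{m}|$; $S=R[x]/(h)$ with $h$ monic of degree $m$ irreducible modulo $\mathfrak{m}$, local with maximal ideal $\mathfrak{M}=\mathfrak{m}S$ and unit group $S^*=S\setminus\mathfrak{M}$. $\sigma$ is a ring automorphism of $S$ generating the Galois group of $R\subseteq S$, with fixed ring $R$, reducing modulo $\mathfrak{M}$ to $y\mapsto y^q$. For $a,\beta\in S$: $N_s(a)=\sigma^{s-1}(a)\cdots\sigma(a)a$ ($N_0(a)=1$) and $\mathcal{D}_a^s(\beta)=\sigma^s(\beta)N_s(a)$. For $\beta\in S^*$, $a^\beta=\sigma(\beta)a\beta^{-1}$. *)

theory Defs
  imports "HOL-Computational_Algebra.Polynomial" "Jordan_Normal_Form.Matrix"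
begin

text \<open>The ambient type 'a is the ring S; R is a subset of it.\<close>

definition subring :: "'a::comm_ring_1 set \<Rightarrow> bool" where
  "subring R \<longleftrightarrow> 0 \<in> R \<and> 1 \<in> R \<and>
     (\<forall>x\<in>R. \<forall>y\<in>R. x + y \<in> R \<and> x - y \<in> R \<and> x * y \<in> R)"

definition ideal_of :: "'a::comm_ring_1 set \<Rightarrow> 'a set \<Rightarrow> bool" where
  "ideal_of R I \<longleftrightarrow> I \<subseteq> R \<and> 0 \<in> I \<and>
     (\<forall>x\<in>I. \<forall>y\<in>I. x + y \<in> I \<and> x - y \<in> I) \<and> (\<forall>r\<in>R. \<forall>x\<in>I. r * x \<in> I)"

definition finite_chain_ring :: "'a::comm_ring_1 set \<Rightarrow> bool" where
  "finite_chain_ring R \<longleftrightarrow> subring R \<and> finite R \<and> (0::'a) \<noteq> 1 \<and>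
     (\<forall>I J. ideal_of R I \<longrightarrow> ideal_of R J \<longrightarrow> I \<subseteq> J \<or> J \<subseteq> I)"

definition max_ideal :: "'a::comm_ring_1 set \<Rightarrow> 'a set" where
  "max_ideal R = {r \<in> R. \<not> (\<exists>u\<in>R. r * u = 1)}"

text \<open>The residue field size q = |R/m|.\<close>
definition residue_card :: "'a::comm_ring_1 set \<Rightarrow> nat" where
  "residue_card R = card ((\<lambda>r. (\<lambda>x. r + x) ` max_ideal R) ` R)"

definition ext_ideal :: "'a::comm_ring_1 set \<Rightarrow> 'a set" where
  "ext_ideal I = {x. \<exists>(k::nat) (f::nat \<Rightarrow> 'a) g. (\<forall>i<k. f i \<in> I) \<and> x = (\<Sum>i<k. f i * g i)}"

text \<open>h monic over R and irreducible modulo m: there are no monic f, g over R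
  of positive degree with h \<equiv> f g (mod m) (residue-field factorizations lift
  to such monic f, g).\<close>
definition irreducible_mod :: "'a::comm_ring_1 set \<Rightarrow> 'a poly \<Rightarrow> bool" where
  "irreducible_mod R h \<longleftrightarrow> degree h \<ge> 1 \<and>
     \<not> (\<exists>f g. (\<forall>i. coeff f i \<in> R) \<and> (\<forall>i. coeff g i \<in> R) \<and>
          lead_coeff f = 1 \<and> lead_coeff g = 1 \<and> degree f \<ge> 1 \<and> degree g \<ge> 1 \<and>
          (\<forall>i. coeff (h - f * g) i \<in> max_ideal R))"

text \<open>S (= UNIV) is R[x]/(h) via x \<mapsto> \<theta>: h(\<theta>) = 0 and every element of S
  is uniquely an R-combination of 1, \<theta>, ..., \<theta>^(m-1).\<close>
definition presentation :: "'a::comm_ring_1 set \<Rightarrow> 'a poly \<Rightarrow> 'a \<Rightarrow> bool" where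
  "presentation R h \<theta> \<longleftrightarrow> (\<forall>i. coeff h i \<in> R) \<and> lead_coeff h = 1 \<and> poly h \<theta> = 0 \<and>
     (\<forall>y. \<exists>!c. (\<forall>i. c i \<in> R) \<and> (\<forall>i\<ge>degree h. c i = 0) \<and>
                y = (\<Sum>i<degree h. c i * \<theta> ^ i))"

definition ring_aut :: "('a::comm_ring_1 \<Rightarrow> 'a) \<Rightarrow> bool" where
  "ring_aut \<tau> \<longleftrightarrow> bij \<tau> \<and> \<tau> 1 = 1 \<and> (\<forall>x y. \<tau> (x + y) = \<tau> x + \<tau> y \<and> \<tau> (x * y) = \<tau> x * \<tau> y)"

definition galois_group :: "'a::comm_ring_1 set \<Rightarrow> ('a \<Rightarrow> 'a) set" where
  "galois_group R = {\<tau>. ring_aut \<tau> \<and> (\<forall>r\<in>R. \<tau> r = r)}"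

definition galois_setting :: "'a::comm_ring_1 set \<Rightarrow> 'a poly \<Rightarrow> 'a \<Rightarrow> ('a \<Rightarrow> 'a) \<Rightarrow> bool" where
  "galois_setting R h \<theta> \<sigma> \<longleftrightarrow>
     finite_chain_ring R \<and> presentation R h \<theta> \<and> irreducible_mod R h \<and>
     \<sigma> \<in> galois_group R \<and> (\<forall>\<tau>\<in>galois_group R. \<exists>k. \<tau> = \<sigma> ^^ k) \<and>
     {x. \<sigma> x = x} = R \<and>
     (\<forall>y. \<sigma> y - y ^ residue_card R \<in> ext_ideal (max_ideal R))"

definition normN :: "('a::comm_ring_1 \<Rightarrow> 'a) \<Rightarrow> nat \<Rightarrow> 'a \<Rightarrow> 'a" where
  "normN \<sigma> s a = (\<Prod>k<s. (\<sigma> ^^ k) a)"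

definition Dop :: "('a::comm_ring_1 \<Rightarrow> 'a) \<Rightarrow> 'a \<Rightarrow> nat \<Rightarrow> 'a \<Rightarrow> 'a" where
  "Dop \<sigma> a s \<beta> = (\<sigma> ^^ s) \<beta> * normN \<sigma> s a"

definition ring_inv :: "'a::comm_ring_1 \<Rightarrow> 'a" where
  "ring_inv b = (THE c. b * c = 1)"

definition twist :: "('a::comm_ring_1 \<Rightarrow> 'a) \<Rightarrow> 'a \<Rightarrow> 'a \<Rightarrow> 'a" where
  "twist \<sigma> a \<beta> = \<sigma> \<beta> * a * ring_inv \<beta>"

definition R_lin_indep :: "'a::comm_ring_1 set \<Rightarrow> nat \<Rightarrow> (nat \<Rightarrow> 'a) \<Rightarrow> bool" where
  "R_lin_indep R k \<beta> \<longleftrightarrow>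
     (\<forall>c. (\<forall>j\<in>{1..k}. c j \<in> R) \<longrightarrow> (\<Sum>j=1..k. c j * \<beta> j) = 0 \<longrightarrow> (\<forall>j\<in>{1..k}. c j = 0))"

definition col_labels :: "nat \<Rightarrow> (nat \<Rightarrow> nat) \<Rightarrow> (nat \<times> nat) list" where
  "col_labels l n = concat (map (\<lambda>i. map (\<lambda>j. (i, j)) [1..<Suc (n i)]) [1..<Suc l])"

definition Mmat :: "('a::comm_ring_1 \<Rightarrow> 'a) \<Rightarrow> nat \<Rightarrow> (nat \<Rightarrow> nat) \<Rightarrow> (nat \<Rightarrow> 'a)
                      \<Rightarrow> (nat \<Rightarrow> nat \<Rightarrow> 'a) \<Rightarrow> 'a mat" where
  "Mmat \<sigma> l n a \<beta> = (let N = (\<Sum>i=1..l. n i) in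
     mat N N (\<lambda>(s, c). case col_labels l n ! c of (i, j) \<Rightarrow> Dop \<sigma> (a i) s (\<beta> i j)))"

end

theory Submission
  imports Defs "Jordan_Normal_Form.Determinant"
begin

(* Everything is done modulo a uniformizer \<pi> of R: it generates the maximal ideal of S,
   S/\<pi>S is a finite field whose elements fixed by \<sigma> come from R, and a square matrix over
   S is invertible as soon as y M \<equiv> 0 (mod \<pi>) forces y \<equiv> 0.  That kernel statement is proved
   by induction on the number of columns.  Writing T\<^sub>a \<gamma> = \<sigma> \<gamma> * a, row s of a column
   (a, \<beta>) is T\<^sub>a\<^sup>s \<beta>; picking one column (a, \<beta>) and dividing the twisted polynomial
   \<Sum> y\<^sub>s T\<^sup>s on the right by T - a\<^sup>\<beta> kills that column and turns every other column
   (a', \<beta>') into (a', \<sigma> \<beta>' * a' - a\<^sup>\<beta> * \<beta>'), with one column fewer.  These new columns are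
   still independent modulo \<pi> within each class of equal a': for a' \<noteq> a by condition (i),
   and for a' = a because \<sigma>-fixed residues lie in R and the \<beta>'s are R-independent. *)

lemma ring_inv_eq: "(b::'a::comm_ring_1) * b' = 1 \<Longrightarrow> ring_inv b = b'"
  unfolding ring_inv_def
proof (rule the_equality)
  fix c assume "b * b' = 1" "b * c = 1"
  then have "c = c * (b * b')" by simp
  also have "\<dots> = (b * c) * b'" by (simp add: ac_simps)
  finally show "c = b'" using \<open>b * c = 1\<close> by simp
qed

lemma mult_ring_inv: "(b::'a::comm_ring_1) dvd 1 \<Longrightarrow> b * ring_inv b = 1"
  by (metis dvdE ring_inv_eq)

lemma unit_ring_inv: "(b::'a::comm_ring_1) dvd 1 \<Longrightarrow> ring_inv b dvd 1"
  by (metis dvdI mult.commute mult_ring_inv)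

lemma unit_mult: "(a::'a::comm_monoid_mult) dvd 1 \<Longrightarrow> b dvd 1 \<Longrightarrow> a * b dvd 1"
  using mult_dvd_mono by fastforce

lemma dvd_unit_mult_cancel:
  assumes "(u::'a::comm_ring_1) dvd 1" and "p dvd u * x"
  shows "p dvd x"
proof -
  obtain v where "1 = u * v" using assms(1) by (rule dvdE)
  then have "x = u * x * v" by (metis mult.assoc mult.commute mult.right_neutral)
  then show ?thesis using assms(2) by (metis dvd_mult2)
qed

lemma dvd_diff_commute: "(a::'a::comm_ring_1) dvd b - c \<longleftrightarrow> a dvd c - b"
  by (metis dvd_minus_iff minus_diff_eq)

lemma twist_mult_kernel:
  assumes "comm_ring_hom \<sigma>" and "\<beta> dvd 1"
  shows "\<sigma> (\<beta> * \<delta>) * \<alpha> - twist \<sigma> \<alpha> \<beta> * (\<beta> * \<delta>) = \<sigma> \<beta> * \<alpha> * (\<sigma> \<delta> - \<delta>)"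
proof -
  interpret comm_ring_hom \<sigma> by (rule assms(1))
  have "twist \<sigma> \<alpha> \<beta> * (\<beta> * \<delta>) = \<sigma> \<beta> * \<alpha> * \<delta> * (\<beta> * ring_inv \<beta>)"
    by (simp add: twist_def ac_simps)
  also have "\<dots> = \<sigma> \<beta> * \<alpha> * \<delta>"
    by (simp add: mult_ring_inv[OF assms(2)])
  finally show ?thesis
    by (simp add: hom_mult right_diff_distrib ac_simps)
qed

lemma twist_diff_unit_factor:
  assumes "comm_ring_hom \<sigma>" and "\<beta> dvd 1" and "\<gamma> dvd 1"
  shows "\<sigma> \<gamma> * \<alpha> - twist \<sigma> \<alpha>' \<beta> * \<gamma> = \<sigma> \<gamma> * (\<alpha> - twist \<sigma> \<alpha>' (\<beta> * ring_inv \<gamma>))"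
proof -
  interpret comm_ring_hom \<sigma> by (rule assms(1))
  have \<beta>: "\<beta> * ring_inv \<beta> = 1" by (rule mult_ring_inv[OF assms(2)])
  have \<gamma>: "\<gamma> * ring_inv \<gamma> = 1" by (rule mult_ring_inv[OF assms(3)])
  have inv: "ring_inv (\<beta> * ring_inv \<gamma>) = ring_inv \<beta> * \<gamma>"
  proof (rule ring_inv_eq)
    have "(\<beta> * ring_inv \<gamma>) * (ring_inv \<beta> * \<gamma>) = (\<beta> * ring_inv \<beta>) * (\<gamma> * ring_inv \<gamma>)"
      by (simp only: ac_simps)
    then show "(\<beta> * ring_inv \<gamma>) * (ring_inv \<beta> * \<gamma>) = 1" by (simp add: \<beta> \<gamma>)
  qed
  have \<sigma>\<gamma>: "\<sigma> \<gamma> * \<sigma> (ring_inv \<gamma>) = 1" using \<gamma> by (metis hom_mult hom_one)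
  have "\<sigma> \<gamma> * twist \<sigma> \<alpha>' (\<beta> * ring_inv \<gamma>) = (\<sigma> \<gamma> * \<sigma> (ring_inv \<gamma>)) * (\<sigma> \<beta> * \<alpha>' * ring_inv \<beta> * \<gamma>)"
    unfolding twist_def inv hom_mult by (simp only: ac_simps)
  also have "\<dots> = twist \<sigma> \<alpha>' \<beta> * \<gamma>"
    unfolding \<sigma>\<gamma> twist_def by simp
  finally show ?thesis by (simp add: right_diff_distrib)
qed

lemma diff_twist_swap:
  assumes "comm_ring_hom \<sigma>" and "b dvd 1"
  shows "a - twist \<sigma> c b = - (\<sigma> b * (c - twist \<sigma> a (ring_inv b)) * ring_inv b)"
proof -
  interpret comm_ring_hom \<sigma> by (rule assms(1))
  have b: "b * ring_inv b = 1" by (rule mult_ring_inv[OF assms(2)])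
  have inv: "ring_inv (ring_inv b) = b"
    by (rule ring_inv_eq) (use b in \<open>simp add: mult.commute\<close>)
  have \<sigma>b: "\<sigma> b * \<sigma> (ring_inv b) = 1" using b by (metis hom_mult hom_one)
  have "\<sigma> b * (c - twist \<sigma> a (ring_inv b)) * ring_inv b
      = \<sigma> b * c * ring_inv b - (\<sigma> b * \<sigma> (ring_inv b)) * a * (b * ring_inv b)"
    unfolding twist_def inv by (simp only: right_diff_distrib left_diff_distrib ac_simps)
  also have "\<dots> = twist \<sigma> c b - a"
    unfolding b \<sigma>b twist_def by simp
  finally show ?thesis by simp
qed

lemma twist_one:
  assumes "comm_ring_hom \<sigma>"
  shows "twist \<sigma> a 1 = a"
proof -
  interpret comm_ring_hom \<sigma> by (rule assms)
  have "ring_inv (1::'a) = 1" by (rule ring_inv_eq) simp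
  then show ?thesis by (simp add: twist_def)
qed

lemma twist_units_symmetric:
  fixes i j l :: nat
  assumes \<sigma>: "comm_ring_hom \<sigma>"
    and cond: "\<forall>i j b. 1 \<le> i \<and> i < j \<and> j \<le> l \<and> b dvd 1 \<longrightarrow> (a i - twist \<sigma> (a j) b) dvd 1"
    and ij: "i \<in> {1..l}" "j \<in> {1..l}" "i \<noteq> j" and b: "b dvd 1"
  shows "(a i - twist \<sigma> (a j) b) dvd 1"
proof (cases "i < j")
  case True
  then show ?thesis using cond ij b by auto
next
  case False
  interpret comm_ring_hom \<sigma> by (rule \<sigma>)
  have "j < i" using False ij(3) by simp
  then have "(a j - twist \<sigma> (a i) (ring_inv b)) dvd 1"
    using cond[rule_format, of j i "ring_inv b"] ij unit_ring_inv[OF b] by auto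
  then have "(\<sigma> b * (a j - twist \<sigma> (a i) (ring_inv b)) * ring_inv b) dvd 1"
    using b unit_ring_inv[OF b] by (simp add: unit_mult)
  then show ?thesis unfolding diff_twist_swap[OF \<sigma> b] by simp
qed

lemma twist_units_blocks:
  fixes l :: nat and a :: "nat \<Rightarrow> 'a::comm_ring_1"
  assumes \<sigma>: "comm_ring_hom \<sigma>"
    and cond: "\<forall>i j b. 1 \<le> i \<and> i < j \<and> j \<le> l \<and> b dvd 1 \<longrightarrow> (a i - twist \<sigma> (a j) b) dvd 1"
  shows "\<forall>k\<in>Sigma {1..l} B. \<forall>k'\<in>Sigma {1..l} B. a (fst k) \<noteq> a (fst k') \<longrightarrow>
           (\<forall>b. b dvd 1 \<longrightarrow> (a (fst k) - twist \<sigma> (a (fst k')) b) dvd 1)"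
proof (intro ballI impI allI)
  fix k k' and b :: 'a
  assume "k \<in> Sigma {1..l} B" "k' \<in> Sigma {1..l} B" "a (fst k) \<noteq> a (fst k')" "b dvd 1"
  then show "(a (fst k) - twist \<sigma> (a (fst k')) b) dvd 1"
    by (intro twist_units_symmetric[OF \<sigma> cond]) auto
qed

lemma inj_on_if_twist_units:
  fixes l :: nat and a :: "nat \<Rightarrow> 'a::comm_ring_1"
  assumes \<sigma>: "comm_ring_hom \<sigma>" and "(0::'a) \<noteq> 1"
    and cond: "\<forall>i j b. 1 \<le> i \<and> i < j \<and> j \<le> l \<and> b dvd 1 \<longrightarrow> (a i - twist \<sigma> (a j) b) dvd 1"
  shows "inj_on a {1..l}"
proof (rule inj_onI, rule ccontr)
  fix i j assume "i \<in> {1..l}" "j \<in> {1..l}" "a i = a j" "i \<noteq> j"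
  then have "(a i - twist \<sigma> (a j) 1) dvd 1" by (intro twist_units_symmetric[OF \<sigma> cond]) auto
  then show False using \<open>a i = a j\<close> twist_one[OF \<sigma>] assms(2) by simp
qed

section \<open>Iterates of the semilinear map \<open>\<gamma> \<mapsto> \<sigma> \<gamma> * a\<close>\<close>

lemma backward_recurrence_solvable:
  fixes y c :: "nat \<Rightarrow> 'a::ring"
  shows "\<exists>w. w (Suc N) = 0 \<and> (\<forall>s\<le>N. y s = w s - w (Suc s) * c s)"
proof (induction N arbitrary: y c)
  case 0
  show ?case by (rule exI[of _ "\<lambda>s. if s = 0 then y 0 else 0"]) simp
next
  case (Suc N)
  obtain w where w: "w (Suc N) = 0" "\<forall>s\<le>N. y (Suc s) = w s - w (Suc s) * c (Suc s)"
    using Suc.IH[of "y \<circ> Suc" "c \<circ> Suc"] by auto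
  define w' where "w' = case_nat (y 0 + w 0 * c 0) w"
  have "y s = w' s - w' (Suc s) * c s" if "s \<le> Suc N" for s
    using that w(2) by (cases s) (auto simp: w'_def)
  moreover have "w' (Suc (Suc N)) = 0" using w(1) by (simp add: w'_def)
  ultimately show ?case by blast
qed

lemma dvd_if_backward_recurrence:
  fixes y w c :: "nat \<Rightarrow> 'a::comm_ring_1"
  assumes "\<forall>s\<le>N. y s = w s - w (Suc s) * c s" and "\<forall>s\<le>Suc N. p dvd w s"
  shows "\<forall>s<Suc N. p dvd y s"
  using assms by (simp add: less_Suc_eq_le)

lemma comm_ring_hom_funpow:
  fixes \<sigma> :: "'a::comm_ring_1 \<Rightarrow> 'a"
  shows "comm_ring_hom \<sigma> \<Longrightarrow> comm_ring_hom (\<sigma> ^^ k)"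
proof (induction k)
  case 0
  show ?case by unfold_locales (simp_all only: funpow_0)
next
  case (Suc k)
  interpret \<sigma>: comm_ring_hom \<sigma> by (rule Suc.prems)
  interpret \<sigma>k: comm_ring_hom "\<sigma> ^^ k" by (rule Suc.IH[OF Suc.prems])
  show ?case by unfold_locales (simp_all add: \<sigma>.hom_add \<sigma>.hom_mult \<sigma>k.hom_add \<sigma>k.hom_mult)
qed

lemma Dop_0: "Dop \<sigma> a 0 \<gamma> = \<gamma>"
  by (simp add: Dop_def normN_def)

lemma Dop_zero:
  assumes "comm_ring_hom \<sigma>"
  shows "Dop \<sigma> a s 0 = 0"
proof -
  interpret \<sigma>s: comm_ring_hom "\<sigma> ^^ s" by (rule comm_ring_hom_funpow[OF assms])
  show ?thesis by (simp add: Dop_def)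
qed

lemma Dop_Suc:
  assumes "comm_ring_hom \<sigma>"
  shows "Dop \<sigma> a (Suc s) \<gamma> = Dop \<sigma> a s (\<sigma> \<gamma> * a)"
proof -
  interpret \<sigma>s: comm_ring_hom "\<sigma> ^^ s" by (rule comm_ring_hom_funpow[OF assms])
  show ?thesis
    by (simp add: Dop_def normN_def funpow_Suc_right \<sigma>s.hom_mult ac_simps del: funpow.simps)
qed

text \<open>The operator \<open>\<gamma> \<mapsto> \<sigma> \<gamma> * a - u * \<gamma>\<close> plays the role of \<open>T - u\<close> for the
  \<sigma>-semilinear map \<open>T \<gamma> = \<sigma> \<gamma> * a\<close>, whose iterates are the \<open>Dop \<sigma> a s\<close>.\<close>

lemma Dop_twisted_diff:
  assumes "comm_ring_hom \<sigma>"
  shows "Dop \<sigma> a s (\<sigma> \<gamma> * a - u * \<gamma>) = Dop \<sigma> a (Suc s) \<gamma> - (\<sigma> ^^ s) u * Dop \<sigma> a s \<gamma>"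
proof -
  interpret \<sigma>s: comm_ring_hom "\<sigma> ^^ s" by (rule comm_ring_hom_funpow[OF assms])
  show ?thesis
    unfolding Dop_Suc[OF assms] by (simp add: Dop_def \<sigma>s.hom_minus \<sigma>s.hom_mult algebra_simps)
qed

lemma Dop_sum_telescope:
  assumes "comm_ring_hom \<sigma>" and "w (Suc N) = 0"
  shows "(\<Sum>s<Suc N. (w s - w (Suc s) * (\<sigma> ^^ s) u) * Dop \<sigma> a s \<gamma>)
       = (\<Sum>s<N. w (Suc s) * Dop \<sigma> a s (\<sigma> \<gamma> * a - u * \<gamma>)) + w 0 * \<gamma>"
proof -
  let ?D = "\<Sum>s<N. w (Suc s) * Dop \<sigma> a (Suc s) \<gamma>"
  let ?E = "\<Sum>s<N. w (Suc s) * (\<sigma> ^^ s) u * Dop \<sigma> a s \<gamma>"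
  have "(\<Sum>s<Suc N. (w s - w (Suc s) * (\<sigma> ^^ s) u) * Dop \<sigma> a s \<gamma>)
      = (\<Sum>s<Suc N. w s * Dop \<sigma> a s \<gamma>) - (\<Sum>s<Suc N. w (Suc s) * (\<sigma> ^^ s) u * Dop \<sigma> a s \<gamma>)"
    by (simp add: left_diff_distrib sum_subtractf)
  also have "(\<Sum>s<Suc N. w s * Dop \<sigma> a s \<gamma>) = w 0 * \<gamma> + ?D"
    by (simp add: sum.lessThan_Suc_shift Dop_0 del: sum.lessThan_Suc)
  also have "(\<Sum>s<Suc N. w (Suc s) * (\<sigma> ^^ s) u * Dop \<sigma> a s \<gamma>) = ?E"
    using assms(2) by simp
  also have "w 0 * \<gamma> + ?D - ?E = (?D - ?E) + w 0 * \<gamma>"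
    by simp
  also have "?D - ?E = (\<Sum>s<N. w (Suc s) * Dop \<sigma> a s (\<sigma> \<gamma> * a - u * \<gamma>))"
    by (simp add: Dop_twisted_diff[OF assms(1)] sum_subtractf right_diff_distrib mult.assoc)
  finally show ?thesis .
qed

lemma Dop_sum_right_division:
  assumes "comm_ring_hom \<sigma>"
  obtains w where "w (Suc N) = 0" and "\<forall>s\<le>N. y s = w s - w (Suc s) * (\<sigma> ^^ s) u"
    and "\<And>a \<gamma>. (\<Sum>s<Suc N. y s * Dop \<sigma> a s \<gamma>)
                 = (\<Sum>s<N. w (Suc s) * Dop \<sigma> a s (\<sigma> \<gamma> * a - u * \<gamma>)) + w 0 * \<gamma>"
proof -
  obtain w where w: "w (Suc N) = 0" "\<forall>s\<le>N. y s = w s - w (Suc s) * (\<sigma> ^^ s) u"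
    using backward_recurrence_solvable[of N y "\<lambda>s. (\<sigma> ^^ s) u"] by blast
  have "(\<Sum>s<Suc N. y s * Dop \<sigma> a s \<gamma>)
      = (\<Sum>s<N. w (Suc s) * Dop \<sigma> a s (\<sigma> \<gamma> * a - u * \<gamma>)) + w 0 * \<gamma>" for a \<gamma>
  proof -
    have "(\<Sum>s<Suc N. y s * Dop \<sigma> a s \<gamma>)
        = (\<Sum>s<Suc N. (w s - w (Suc s) * (\<sigma> ^^ s) u) * Dop \<sigma> a s \<gamma>)"
      using w(2) by (intro sum.cong) auto
    also have "\<dots> = (\<Sum>s<N. w (Suc s) * Dop \<sigma> a s (\<sigma> \<gamma> * a - u * \<gamma>)) + w 0 * \<gamma>"
      by (rule Dop_sum_telescope[where w = w and N = N, OF assms w(1)])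
    finally show ?thesis .
  qed
  with w that show ?thesis by blast
qed

section \<open>The kernel modulo a residue prime\<close>

definition R_lin_indep_mod :: "'a::comm_ring_1 set \<Rightarrow> 'a \<Rightarrow> 'b set \<Rightarrow> ('b \<Rightarrow> 'a) \<Rightarrow> bool" where
  "R_lin_indep_mod R p K B \<longleftrightarrow>
     (\<forall>c. (\<forall>k\<in>K. c k \<in> R) \<longrightarrow> p dvd (\<Sum>k\<in>K. c k * B k) \<longrightarrow> (\<forall>k\<in>K. p dvd c k))"

lemma R_lin_indep_modD:
  "R_lin_indep_mod R p K B \<Longrightarrow> \<forall>k\<in>K. c k \<in> R \<Longrightarrow> p dvd (\<Sum>k\<in>K. c k * B k) \<Longrightarrow> k \<in> K
    \<Longrightarrow> p dvd c k"
  unfolding R_lin_indep_mod_def by blast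

lemma R_lin_indep_mod_blocks:
  assumes indep: "\<forall>i\<in>{1..l}. R_lin_indep_mod R p {1..n i} (\<beta> i)"
    and inj: "inj_on a {1..l}"
  shows "R_lin_indep_mod R p {k \<in> Sigma {1..l} (\<lambda>i. {1..n i}). a (fst k) = \<alpha>} (\<lambda>k. \<beta> (fst k) (snd k))"
proof (cases "\<exists>i\<in>{1..l}. a i = \<alpha>")
  case True
  then obtain i where i: "i \<in> {1..l}" "a i = \<alpha>" by blast
  have block: "{k \<in> Sigma {1..l} (\<lambda>i. {1..n i}). a (fst k) = \<alpha>} = Pair i ` {1..n i}"
    using i inj unfolding inj_on_def by force
  show ?thesis
    unfolding R_lin_indep_mod_def block
  proof (intro allI impI ballI)
    fix c k
    assume cR: "\<forall>k\<in>Pair i ` {1..n i}. c k \<in> R"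
      and dvd: "p dvd (\<Sum>k\<in>Pair i ` {1..n i}. c k * \<beta> (fst k) (snd k))"
      and k: "k \<in> Pair i ` {1..n i}"
    have "\<forall>j\<in>{1..n i}. c (i, j) \<in> R" using cR by blast
    moreover have "p dvd (\<Sum>j\<in>{1..n i}. c (i, j) * \<beta> i j)"
      using dvd by (simp add: sum.reindex inj_on_def)
    moreover obtain j where "j \<in> {1..n i}" "k = (i, j)" using k by blast
    ultimately show "p dvd c k"
      using R_lin_indep_modD[OF indep[rule_format, OF i(1)], of "\<lambda>j. c (i, j)"] by blast
  qed
next
  case False
  then have empty: "{k \<in> Sigma {1..l} (\<lambda>i. {1..n i}). a (fst k) = \<alpha>} = {}" by auto
  show ?thesis unfolding empty R_lin_indep_mod_def by simp
qed

locale residue_galois = comm_ring_hom \<sigma> for \<sigma> :: "'a::comm_ring_1 \<Rightarrow> 'a" +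
  fixes R :: "'a set" and p :: 'a
  assumes fixes_R: "r \<in> R \<Longrightarrow> \<sigma> r = r"
    and zero_in_R: "0 \<in> R" and one_in_R: "1 \<in> R"
    and uminus_in_R: "r \<in> R \<Longrightarrow> - r \<in> R"
    and not_dvd_one: "\<not> p dvd 1"
    and unit_if_not_dvd: "\<not> p dvd x \<Longrightarrow> x dvd 1"
    and fixed_mod_lift: "p dvd \<sigma> x - x \<Longrightarrow> \<exists>r\<in>R. p dvd x - r"
begin

lemma not_dvd_unit: "x dvd 1 \<Longrightarrow> \<not> p dvd x"
  using not_dvd_one dvd_trans by blast

lemma unit_if_R_lin_indep_mod:
  assumes indep: "R_lin_indep_mod R p K B" and "finite K" and k: "k \<in> K"
  shows "B k dvd 1"
proof (rule unit_if_not_dvd)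
  let ?c = "\<lambda>j. if j = k then 1 else 0"
  have "(\<Sum>j\<in>K. ?c j * B j) = B k"
    using assms(2) k by (simp add: if_distrib[of "\<lambda>x. x * _"] cong: if_cong)
  moreover have "\<forall>j\<in>K. ?c j \<in> R" using zero_in_R one_in_R by simp
  moreover have "\<not> p dvd ?c k" using not_dvd_one by simp
  ultimately show "\<not> p dvd B k"
    using R_lin_indep_modD[OF indep, of ?c k] k by auto
qed

lemma sum_semilinear:
  assumes "\<forall>k\<in>K. c k \<in> R"
  shows "(\<Sum>k\<in>K. c k * (\<sigma> (B k) * \<alpha> - u * B k))
       = \<sigma> (\<Sum>k\<in>K. c k * B k) * \<alpha> - u * (\<Sum>k\<in>K. c k * B k)"
proof -
  have "(\<Sum>k\<in>K. c k * (\<sigma> (B k) * \<alpha> - u * B k)) = (\<Sum>k\<in>K. \<sigma> (c k * B k) * \<alpha> - u * (c k * B k))"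
    using assms by (intro sum.cong) (simp_all add: hom_mult fixes_R algebra_simps)
  then show ?thesis by (simp add: hom_sum sum_subtractf sum_distrib_left sum_distrib_right)
qed

lemma R_lin_indep_mod_twisted_other_class:
  assumes indep: "R_lin_indep_mod R p K B" and A_const: "\<forall>k\<in>K. A k = \<alpha>"
    and twisted: "\<forall>k\<in>K. \<forall>b. b dvd 1 \<longrightarrow> (A k - twist \<sigma> \<alpha>0 b) dvd 1"
    and \<beta>: "\<beta> dvd 1"
  shows "R_lin_indep_mod R p K (\<lambda>k. \<sigma> (B k) * A k - twist \<sigma> \<alpha>0 \<beta> * B k)"
  unfolding R_lin_indep_mod_def
proof (intro allI impI ballI)
  fix c k1
  assume cR: "\<forall>k\<in>K. c k \<in> R"
    and dvd: "p dvd (\<Sum>k\<in>K. c k * (\<sigma> (B k) * A k - twist \<sigma> \<alpha>0 \<beta> * B k))"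
    and k1: "k1 \<in> K"
  define \<gamma> where "\<gamma> = (\<Sum>k\<in>K. c k * B k)"
  have "(\<Sum>k\<in>K. c k * (\<sigma> (B k) * A k - twist \<sigma> \<alpha>0 \<beta> * B k))
      = (\<Sum>k\<in>K. c k * (\<sigma> (B k) * \<alpha> - twist \<sigma> \<alpha>0 \<beta> * B k))"
    using A_const by (intro sum.cong) simp_all
  also have "\<dots> = \<sigma> \<gamma> * \<alpha> - twist \<sigma> \<alpha>0 \<beta> * \<gamma>"
    unfolding \<gamma>_def by (rule sum_semilinear[OF cR])
  finally have dvd\<gamma>: "p dvd \<sigma> \<gamma> * \<alpha> - twist \<sigma> \<alpha>0 \<beta> * \<gamma>" using dvd by simp
  have "p dvd \<gamma>"
  proof (rule ccontr)
    assume "\<not> p dvd \<gamma>"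
    then have \<gamma>: "\<gamma> dvd 1" by (rule unit_if_not_dvd)
    have "(A k1 - twist \<sigma> \<alpha>0 (\<beta> * ring_inv \<gamma>)) dvd 1"
      using twisted k1 unit_mult[OF \<beta> unit_ring_inv[OF \<gamma>]] by blast
    then have "(\<sigma> \<gamma> * \<alpha> - twist \<sigma> \<alpha>0 \<beta> * \<gamma>) dvd 1"
      unfolding twist_diff_unit_factor[OF comm_ring_hom_axioms \<beta> \<gamma>]
      using A_const k1 \<gamma> by (simp add: unit_mult)
    then show False using dvd\<gamma> not_dvd_unit by blast
  qed
  then show "p dvd c k1" using R_lin_indep_modD[OF indep cR _ k1] unfolding \<gamma>_def by blast
qed

lemma R_lin_indep_mod_twisted_same_class:
  assumes indep: "R_lin_indep_mod R p (insert k0 K) B" and "k0 \<notin> K" and "finite K"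
    and A_const: "\<forall>k\<in>K. A k = \<alpha>0" and \<alpha>0: "\<alpha>0 dvd 1" and \<beta>: "B k0 dvd 1"
  shows "R_lin_indep_mod R p K (\<lambda>k. \<sigma> (B k) * A k - twist \<sigma> \<alpha>0 (B k0) * B k)"
  unfolding R_lin_indep_mod_def
proof (intro allI impI ballI)
  fix c k1
  assume cR: "\<forall>k\<in>K. c k \<in> R"
    and dvd: "p dvd (\<Sum>k\<in>K. c k * (\<sigma> (B k) * A k - twist \<sigma> \<alpha>0 (B k0) * B k))"
    and k1: "k1 \<in> K"
  define \<gamma> where "\<gamma> = (\<Sum>k\<in>K. c k * B k)"
  define \<delta> where "\<delta> = ring_inv (B k0) * \<gamma>"
  have \<gamma>\<delta>: "\<gamma> = B k0 * \<delta>"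
    unfolding \<delta>_def by (simp add: mult.assoc[symmetric] mult_ring_inv[OF \<beta>])
  have "(\<Sum>k\<in>K. c k * (\<sigma> (B k) * A k - twist \<sigma> \<alpha>0 (B k0) * B k))
      = (\<Sum>k\<in>K. c k * (\<sigma> (B k) * \<alpha>0 - twist \<sigma> \<alpha>0 (B k0) * B k))"
    using A_const by (intro sum.cong) simp_all
  also have "\<dots> = \<sigma> \<gamma> * \<alpha>0 - twist \<sigma> \<alpha>0 (B k0) * \<gamma>"
    unfolding \<gamma>_def by (rule sum_semilinear[OF cR])
  also have "\<dots> = \<sigma> (B k0) * \<alpha>0 * (\<sigma> \<delta> - \<delta>)"
    unfolding \<gamma>\<delta> by (rule twist_mult_kernel[OF comm_ring_hom_axioms \<beta>])
  finally have "p dvd \<sigma> (B k0) * \<alpha>0 * (\<sigma> \<delta> - \<delta>)" using dvd by simp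
  then have "p dvd \<sigma> \<delta> - \<delta>"
    by (rule dvd_unit_mult_cancel[OF unit_mult[OF hom_dvd_1[OF \<beta>] \<alpha>0]])
  then obtain r where r: "r \<in> R" "p dvd \<delta> - r" using fixed_mod_lift by blast
  define c' where "c' = c(k0 := - r)"
  have "(\<Sum>k\<in>insert k0 K. c' k * B k) = c' k0 * B k0 + (\<Sum>k\<in>K. c' k * B k)"
    by (rule sum.insert[OF assms(3,2)])
  also have "(\<Sum>k\<in>K. c' k * B k) = \<gamma>"
    unfolding \<gamma>_def c'_def using assms(2) by (intro sum.cong) auto
  also have "c' k0 * B k0 + \<gamma> = B k0 * (\<delta> - r)"
    unfolding c'_def \<gamma>\<delta> by (simp add: algebra_simps)
  finally have "p dvd (\<Sum>k\<in>insert k0 K. c' k * B k)" using r(2) by simp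
  moreover have "\<forall>k\<in>insert k0 K. c' k \<in> R" using cR r(1) uminus_in_R unfolding c'_def by simp
  ultimately have "p dvd c' k1" using R_lin_indep_modD[OF indep] k1 by blast
  moreover have "k1 \<noteq> k0" using k1 assms(2) by blast
  ultimately show "p dvd c k1" unfolding c'_def by simp
qed

lemma unit_if_R_lin_indep_mod_classes:
  assumes "finite C" and "k \<in> C" and "\<forall>\<alpha>. R_lin_indep_mod R p {k\<in>C. A k = \<alpha>} B"
  shows "B k dvd 1"
proof (rule unit_if_R_lin_indep_mod[OF assms(3)[rule_format]])
  show "finite {j \<in> C. A j = A k}" and "k \<in> {j \<in> C. A j = A k}" using assms(1,2) by simp_all
qed

lemma R_lin_indep_mod_twisted:
  assumes fin: "finite C" and k0: "k0 \<in> C" and units: "\<forall>k\<in>C. A k dvd 1"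
    and twisted: "\<forall>k\<in>C. \<forall>k'\<in>C. A k \<noteq> A k' \<longrightarrow> (\<forall>b. b dvd 1 \<longrightarrow> (A k - twist \<sigma> (A k') b) dvd 1)"
    and indep: "\<forall>\<alpha>. R_lin_indep_mod R p {k\<in>C. A k = \<alpha>} B"
  shows "R_lin_indep_mod R p {k \<in> C - {k0}. A k = \<alpha>}
           (\<lambda>k. \<sigma> (B k) * A k - twist \<sigma> (A k0) (B k0) * B k)"
proof -
  have \<beta>: "B k0 dvd 1" by (rule unit_if_R_lin_indep_mod_classes[OF fin k0 indep])
  show ?thesis
  proof (cases "\<alpha> = A k0")
    case True
    have insert_class: "insert k0 {k \<in> C - {k0}. A k = \<alpha>} = {k \<in> C. A k = \<alpha>}"
      using True k0 by auto
    show ?thesis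
    proof (rule R_lin_indep_mod_twisted_same_class)
      show "R_lin_indep_mod R p (insert k0 {k \<in> C - {k0}. A k = \<alpha>}) B"
        unfolding insert_class using indep by blast
      show "\<forall>k\<in>{k \<in> C - {k0}. A k = \<alpha>}. A k = A k0" using True by blast
    qed (use fin units k0 \<beta> in auto)
  next
    case False
    have "{k \<in> C - {k0}. A k = \<alpha>} = {k \<in> C. A k = \<alpha>}" using False by auto
    moreover have "R_lin_indep_mod R p {k \<in> C. A k = \<alpha>}
        (\<lambda>k. \<sigma> (B k) * A k - twist \<sigma> (A k0) (B k0) * B k)"
    proof (rule R_lin_indep_mod_twisted_other_class[where \<alpha> = \<alpha>])
      show "\<forall>k\<in>{k \<in> C. A k = \<alpha>}. \<forall>b. b dvd 1 \<longrightarrow> (A k - twist \<sigma> (A k0) b) dvd 1"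
        using twisted k0 False by auto
    qed (use indep \<beta> in auto)
    ultimately show ?thesis by simp
  qed
qed

lemma Dop_kernel_mod:
  assumes "finite C" and "card C = N"
    and units: "\<forall>k\<in>C. A k dvd 1"
    and twisted: "\<forall>k\<in>C. \<forall>k'\<in>C. A k \<noteq> A k' \<longrightarrow> (\<forall>b. b dvd 1 \<longrightarrow> (A k - twist \<sigma> (A k') b) dvd 1)"
    and indep: "\<forall>\<alpha>. R_lin_indep_mod R p {k\<in>C. A k = \<alpha>} B"
    and kernel: "\<forall>k\<in>C. p dvd (\<Sum>s<N. y s * Dop \<sigma> (A k) s (B k))"
  shows "\<forall>s<N. p dvd y s"
  using assms
proof (induction N arbitrary: C B y)
  case 0
  then show ?case by simp
next
  case (Suc N)
  note fin = Suc.prems(1) and units = Suc.prems(3) and twisted = Suc.prems(4)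
    and indep = Suc.prems(5) and kernel = Suc.prems(6)
  have "C \<noteq> {}" using Suc.prems(2) by auto
  then obtain k0 where k0: "k0 \<in> C" by blast
  define u where "u = twist \<sigma> (A k0) (B k0)"
  define B' where "B' k = \<sigma> (B k) * A k - u * B k" for k
  have \<beta>: "B k0 dvd 1" by (rule unit_if_R_lin_indep_mod_classes[OF fin k0 indep])
  obtain w where w: "w (Suc N) = 0" "\<forall>s\<le>N. y s = w s - w (Suc s) * (\<sigma> ^^ s) u"
    and division: "\<And>a \<gamma>. (\<Sum>s<Suc N. y s * Dop \<sigma> a s \<gamma>)
                         = (\<Sum>s<N. w (Suc s) * Dop \<sigma> a s (\<sigma> \<gamma> * a - u * \<gamma>)) + w 0 * \<gamma>"
    using Dop_sum_right_division[OF comm_ring_hom_axioms, where N = N and y = y and u = u] by blast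
  have expand: "(\<Sum>s<Suc N. y s * Dop \<sigma> (A k) s (B k))
      = (\<Sum>s<N. w (Suc s) * Dop \<sigma> (A k) s (B' k)) + w 0 * B k" for k
    unfolding B'_def by (rule division)
  have "B' k0 = 0"
    using twist_mult_kernel[OF comm_ring_hom_axioms \<beta>, of 1] unfolding B'_def u_def by simp
  have "p dvd (\<Sum>s<Suc N. y s * Dop \<sigma> (A k0) s (B k0))" using kernel k0 by blast
  also have "\<dots> = B k0 * w 0"
    unfolding expand \<open>B' k0 = 0\<close> by (simp add: Dop_zero[OF comm_ring_hom_axioms] mult.commute)
  finally have w0: "p dvd w 0" by (rule dvd_unit_mult_cancel[OF \<beta>])
  have "\<forall>s<N. p dvd (w \<circ> Suc) s"
  proof (rule Suc.IH[of "C - {k0}" B' "w \<circ> Suc"])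
    show "finite (C - {k0})" and "card (C - {k0}) = N" using fin Suc.prems(2) k0 by auto
    show "\<forall>k\<in>C - {k0}. A k dvd 1" using units by blast
    show "\<forall>k\<in>C - {k0}. \<forall>k'\<in>C - {k0}. A k \<noteq> A k' \<longrightarrow>
        (\<forall>b. b dvd 1 \<longrightarrow> (A k - twist \<sigma> (A k') b) dvd 1)"
      using twisted by blast
    show "\<forall>\<alpha>. R_lin_indep_mod R p {k \<in> C - {k0}. A k = \<alpha>} B'"
      unfolding B'_def u_def using R_lin_indep_mod_twisted[OF fin k0 units twisted indep] ..
    show "\<forall>k\<in>C - {k0}. p dvd (\<Sum>s<N. (w \<circ> Suc) s * Dop \<sigma> (A k) s (B' k))"
    proof
      fix k assume "k \<in> C - {k0}"
      then have "p dvd (\<Sum>s<N. w (Suc s) * Dop \<sigma> (A k) s (B' k)) + w 0 * B k"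
        using kernel unfolding expand by blast
      then show "p dvd (\<Sum>s<N. (w \<circ> Suc) s * Dop \<sigma> (A k) s (B' k))"
        using w0 by (simp add: dvd_add_left_iff)
    qed
  qed
  then have "\<forall>s\<le>Suc N. p dvd w s"
    using w(1) w0 by (metis comp_apply dvd_0_right le_Suc_eq less_Suc_eq_0_disj less_Suc_eq_le)
  then show ?case by (rule dvd_if_backward_recurrence[OF w(2)])
qed
end

lemma power_eq_power_shift:
  assumes "finite A" and "\<And>k. (x::'a::monoid_mult) ^ k \<in> A"
  obtains i d where "0 < d" and "x ^ (i + d) = x ^ i"
proof -
  have "finite (range (\<lambda>k. x ^ k))" using assms by (auto intro: finite_subset)
  then have "\<not> inj (\<lambda>k. x ^ k)" using finite_imageD infinite_UNIV_nat by blast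
  then obtain i j where "x ^ i = x ^ j" and "i < j"
    unfolding inj_def by (metis linorder_neqE_nat)
  then show ?thesis using that[of "j - i" i] by simp
qed

lemma not_dvd_one_if_nilpotent:
  assumes "(x::'a::comm_ring_1) ^ t = 0" and "(0::'a) \<noteq> 1"
  shows "\<not> x dvd 1"
proof
  assume "x dvd 1"
  then have "x ^ t dvd 1" using dvd_power_same[of x 1 t] by simp
  then show False using assms by simp
qed

lemma one_minus_nilpotent_unit:
  assumes "(x::'a::comm_ring_1) ^ t = 0"
  shows "(1 - x) dvd 1"
proof
  show "1 = (1 - x) * (\<Sum>i<t. x ^ i)"
    using power_diff_1_eq[of x t] assms by (simp add: algebra_simps)
qed

lemma monic_X_power_minus_X:
  assumes "2 \<le> q" and "(1::'a::comm_ring_1) \<noteq> 0"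
  shows "lead_coeff (monom 1 q - monom (1::'a) 1) = 1"
    and "degree (monom 1 q - monom (1::'a) 1) = q"
proof -
  let ?f = "monom 1 q - monom (1::'a) 1"
  have "degree ?f \<le> q" by (rule degree_le) (use assms(1) in simp)
  moreover have "coeff ?f q = 1" using assms(1) by simp
  ultimately show "degree ?f = q" using le_degree[of ?f q] assms(2) by fastforce
  then show "lead_coeff ?f = 1" using \<open>coeff ?f q = 1\<close> by simp
qed

lemma lead_coeff_synthetic_div:
  fixes f :: "'a::comm_ring_1 poly"
  assumes "degree f = Suc n"
  shows "lead_coeff (synthetic_div f z) = lead_coeff f"
proof -
  have "degree (synthetic_div f z) = n" using assms by (simp add: degree_synthetic_div)
  moreover have "coeff f (Suc n) = coeff (synthetic_div f z) n"
    using arg_cong[OF synthetic_div_correct'[of z f, symmetric], of "\<lambda>q. coeff q (Suc n)"]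
      \<open>degree (synthetic_div f z) = n\<close> by (simp add: coeff_eq_0)
  ultimately show ?thesis using assms by simp
qed

lemma card_incongruent_roots_le:
  fixes f :: "'a::comm_ring_1 poly" and p :: 'a
  assumes prime: "\<And>a b. p dvd a * b \<Longrightarrow> \<not> p dvd b \<Longrightarrow> p dvd a" and "\<not> p dvd 1"
    and "lead_coeff f = 1" and "finite Z"
    and "\<forall>x\<in>Z. \<forall>y\<in>Z. x \<noteq> y \<longrightarrow> \<not> p dvd x - y" and "\<forall>x\<in>Z. p dvd poly f x"
  shows "card Z \<le> degree f"
  using assms(3-)
proof (induction "degree f" arbitrary: f Z)
  case 0
  then have "f = 1" by (metis one_poly_eq_simps(1) degree_eq_zeroE coeff_pCons_0)
  then have "Z = {}" using 0 assms(2) by auto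
  then show ?case by simp
next
  case (Suc n)
  show ?case
  proof (cases "Z = {}")
    case True
    then show ?thesis by simp
  next
    case False
    then obtain z where z: "z \<in> Z" by blast
    define g where "g = synthetic_div f z"
    have fg: "f = [:- z, 1:] * g + [:poly f z:]"
      unfolding g_def by (rule synthetic_div_correct'[symmetric])
    have dg: "degree g = n" unfolding g_def degree_synthetic_div using Suc.hyps(2) by simp
    have lg: "lead_coeff g = 1"
      unfolding g_def using lead_coeff_synthetic_div[OF Suc.hyps(2)[symmetric]] Suc.prems(1) by simp
    have "\<forall>x\<in>Z - {z}. p dvd poly g x"
    proof
      fix x assume x: "x \<in> Z - {z}"
      have "(x - z) * poly g x = poly f x - poly f z"
        using arg_cong[OF fg, of "\<lambda>q. poly q x"] by (simp add: algebra_simps)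
      then have "p dvd poly g x * (x - z)" using Suc.prems(4) x z by (simp add: mult.commute)
      moreover have "\<not> p dvd x - z" using Suc.prems(3) x z by blast
      ultimately show "p dvd poly g x" by (rule prime)
    qed
    then have "card (Z - {z}) \<le> n"
      using Suc.hyps(1)[of g "Z - {z}"] dg lg Suc.prems(2,3) by auto
    then show ?thesis using z Suc.prems(2) Suc.hyps(2) by (simp add: card_Diff_singleton_if)
  qed
qed

lemma monic_quotient:
  fixes f h :: "'a::comm_ring_1 poly"
  assumes "(1::'a) \<noteq> 0" and f: "lead_coeff f = 1" and h: "lead_coeff h = 1"
    and hf: "h = f * q + r" and r: "r = 0 \<or> degree r < degree f" and "degree f \<le> degree h"
  shows "lead_coeff q = 1" and "degree h = degree f + degree q"
proof -
  have "q \<noteq> 0"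
  proof
    assume "q = 0"
    then have "h = r" using hf by simp
    then show False using r assms(1,6) h by auto
  qed
  have fq: "coeff (f * q) (degree f + degree q) = lead_coeff q"
    using coeff_mult_degree_sum[of f q] f by simp
  then have dfq: "degree (f * q) = degree f + degree q"
    using degree_mult_le[of f q] le_degree[of "f * q" "degree f + degree q"] \<open>q \<noteq> 0\<close> by simp
  then have "r = 0 \<or> degree r < degree (f * q)" using r by auto
  then have "degree h = degree (f * q)" and "lead_coeff h = lead_coeff (f * q)"
    using hf by (auto simp: degree_add_eq_left coeff_eq_0)
  then show "lead_coeff q = 1" and "degree h = degree f + degree q"
    using h dfq fq by simp_all
qed

section \<open>Finite chain rings\<close>

locale fin_chain_ring =
  fixes R :: "'a::comm_ring_1 set"
  assumes finite_chain_ring: "finite_chain_ring R"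
begin

lemma finite_R: "finite R" and zero_neq_one: "(0::'a) \<noteq> 1"
  and ideals_chain: "ideal_of R I \<Longrightarrow> ideal_of R J \<Longrightarrow> I \<subseteq> J \<or> J \<subseteq> I"
  using finite_chain_ring unfolding finite_chain_ring_def by auto

lemma zero_in_R: "0 \<in> R" and one_in_R: "1 \<in> R"
  and add_in_R: "x \<in> R \<Longrightarrow> y \<in> R \<Longrightarrow> x + y \<in> R"
  and diff_in_R: "x \<in> R \<Longrightarrow> y \<in> R \<Longrightarrow> x - y \<in> R"
  and mult_in_R: "x \<in> R \<Longrightarrow> y \<in> R \<Longrightarrow> x * y \<in> R"
  using finite_chain_ring unfolding finite_chain_ring_def subring_def by auto

lemma uminus_in_R: "x \<in> R \<Longrightarrow> - x \<in> R"
  using diff_in_R[OF zero_in_R] by fastforce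

lemma power_in_R: "x \<in> R \<Longrightarrow> x ^ k \<in> R"
  by (induction k) (auto simp: one_in_R mult_in_R)

lemma sum_in_R: "(\<And>i. i \<in> I \<Longrightarrow> f i \<in> R) \<Longrightarrow> sum f I \<in> R"
  by (induction I rule: infinite_finite_induct) (auto simp: zero_in_R add_in_R)

lemma zero_in_max_ideal: "0 \<in> max_ideal R"
  using zero_in_R zero_neq_one unfolding max_ideal_def by auto

lemma unit_if_notin_max_ideal: "x \<in> R \<Longrightarrow> x \<notin> max_ideal R \<Longrightarrow> \<exists>u\<in>R. x * u = 1"
  unfolding max_ideal_def by auto

definition principal_ideal :: "'a \<Rightarrow> 'a set" where
  "principal_ideal x = (\<lambda>r. x * r) ` R"

lemma ideal_of_principal_ideal:
  assumes x: "x \<in> R"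
  shows "ideal_of R (principal_ideal x)"
  unfolding ideal_of_def
proof (intro conjI)
  show "principal_ideal x \<subseteq> R" unfolding principal_ideal_def using x mult_in_R by auto
  show "0 \<in> principal_ideal x" unfolding principal_ideal_def using zero_in_R by force
  show "\<forall>u\<in>principal_ideal x. \<forall>v\<in>principal_ideal x.
          u + v \<in> principal_ideal x \<and> u - v \<in> principal_ideal x"
  proof (intro ballI)
    fix u v assume "u \<in> principal_ideal x" "v \<in> principal_ideal x"
    then obtain a b where ab: "a \<in> R" "b \<in> R" "u = x * a" "v = x * b"
      unfolding principal_ideal_def by auto
    have "u + v = x * (a + b)" "u - v = x * (a - b)" using ab by (simp_all add: algebra_simps)
    then show "u + v \<in> principal_ideal x \<and> u - v \<in> principal_ideal x"
      unfolding principal_ideal_def using ab(1,2) add_in_R diff_in_R by auto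
  qed
  show "\<forall>r\<in>R. \<forall>u\<in>principal_ideal x. r * u \<in> principal_ideal x"
  proof (intro ballI)
    fix r u assume r: "r \<in> R" and "u \<in> principal_ideal x"
    then obtain a where a: "a \<in> R" "u = x * a" unfolding principal_ideal_def by auto
    then have "r * u = x * (r * a)" by (simp add: algebra_simps)
    then show "r * u \<in> principal_ideal x"
      unfolding principal_ideal_def using a(1) r mult_in_R by auto
  qed
qed

text \<open>Since the ideals of \<open>R\<close> form a chain, a maximal element among the principal ideals
  generated by non-units contains every non-unit.\<close>

lemma max_ideal_principal: "\<exists>\<pi>\<in>R. max_ideal R = principal_ideal \<pi>"
proof -
  have sub: "max_ideal R \<subseteq> R" unfolding max_ideal_def by auto
  have fin: "finite (principal_ideal ` max_ideal R)"
    using finite_subset[OF sub finite_R] by simp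
  have ne: "principal_ideal ` max_ideal R \<noteq> {}" using zero_in_max_ideal by blast
  from finite_has_maximal[OF fin ne] obtain P where "P \<in> principal_ideal ` max_ideal R"
    and maximal: "\<forall>Q\<in>principal_ideal ` max_ideal R. P \<le> Q \<longrightarrow> P = Q" ..
  then obtain \<pi> where \<pi>: "\<pi> \<in> max_ideal R" and P: "P = principal_ideal \<pi>" by blast
  have "x \<in> principal_ideal \<pi>" if x: "x \<in> max_ideal R" for x
  proof -
    have "principal_ideal x \<subseteq> principal_ideal \<pi> \<or> principal_ideal \<pi> \<subseteq> principal_ideal x"
      using ideals_chain[OF ideal_of_principal_ideal ideal_of_principal_ideal] x \<pi> sub by blast
    then have "principal_ideal x \<subseteq> principal_ideal \<pi>"
      using maximal x unfolding P by blast
    moreover have "x \<in> principal_ideal x" unfolding principal_ideal_def using one_in_R by force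
    ultimately show ?thesis by blast
  qed
  moreover have "y \<in> max_ideal R" if "y \<in> principal_ideal \<pi>" for y
  proof -
    from that obtain r where r: "r \<in> R" "y = \<pi> * r" by (auto simp: principal_ideal_def)
    have "\<not> (\<exists>u\<in>R. y * u = 1)"
    proof
      assume "\<exists>u\<in>R. y * u = 1"
      then obtain u where "u \<in> R" "\<pi> * (r * u) = 1" using r by (auto simp: mult.assoc)
      then show False using \<pi> mult_in_R r(1) unfolding max_ideal_def by blast
    qed
    then show ?thesis using r \<pi> sub mult_in_R unfolding max_ideal_def by auto
  qed
  ultimately show ?thesis using \<pi> sub by blast
qed

definition uniformizer :: 'a where
  "uniformizer = (SOME \<pi>. \<pi> \<in> R \<and> max_ideal R = principal_ideal \<pi>)"

lemma uniformizer_in_R: "uniformizer \<in> R"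
  and max_ideal_eq: "max_ideal R = principal_ideal uniformizer"
  using someI_ex[OF max_ideal_principal[unfolded Bex_def]] unfolding uniformizer_def by auto

lemma uniformizer_mult_in_max_ideal: "r \<in> R \<Longrightarrow> uniformizer * r \<in> max_ideal R"
  unfolding max_ideal_eq principal_ideal_def by simp

lemma max_ideal_dvd: "x \<in> max_ideal R \<Longrightarrow> uniformizer dvd x"
  unfolding max_ideal_eq principal_ideal_def by auto

lemma max_ideal_add: "x \<in> max_ideal R \<Longrightarrow> y \<in> max_ideal R \<Longrightarrow> x + y \<in> max_ideal R"
  and max_ideal_diff: "x \<in> max_ideal R \<Longrightarrow> y \<in> max_ideal R \<Longrightarrow> x - y \<in> max_ideal R"
  unfolding max_ideal_eq principal_ideal_def
  by (auto simp: distrib_left[symmetric] right_diff_distrib[symmetric] add_in_R diff_in_R)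

lemma one_notin_max_ideal: "1 \<notin> max_ideal R"
  unfolding max_ideal_def using one_in_R by auto

lemma uniformizer_nilpotent: "\<exists>t. uniformizer ^ t = 0"
proof -
  obtain i d where d: "0 < d" and eq: "uniformizer ^ (i + d) = uniformizer ^ i"
    using power_eq_power_shift[OF finite_R power_in_R[OF uniformizer_in_R]] .
  have "uniformizer ^ d \<in> max_ideal R"
    using uniformizer_mult_in_max_ideal[OF power_in_R[OF uniformizer_in_R, of "d - 1"]] d
    by (simp add: power_eq_if)
  have "1 - uniformizer ^ d \<notin> max_ideal R"
  proof
    assume "1 - uniformizer ^ d \<in> max_ideal R"
    from max_ideal_add[OF this \<open>uniformizer ^ d \<in> max_ideal R\<close>]
    show False using one_notin_max_ideal by simp
  qed
  moreover have "1 - uniformizer ^ d \<in> R" by (simp add: diff_in_R one_in_R power_in_R uniformizer_in_R)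
  ultimately obtain v where v: "(1 - uniformizer ^ d) * v = 1"
    using unit_if_notin_max_ideal by blast
  have "uniformizer ^ i = uniformizer ^ i * (1 - uniformizer ^ d) * v"
    using v by (simp add: mult.assoc)
  also have "uniformizer ^ i * (1 - uniformizer ^ d) = 0"
    using eq by (simp add: algebra_simps power_add)
  finally show ?thesis by auto
qed

lemma uniformizer_annihilator: "\<exists>e\<in>R. e \<noteq> 0 \<and> e * uniformizer = 0"
proof -
  define t where "t = (LEAST t. uniformizer ^ t = 0)"
  have t: "uniformizer ^ t = 0" unfolding t_def using uniformizer_nilpotent by (rule LeastI_ex)
  then obtain t' where t': "t = Suc t'" using zero_neq_one by (cases t) auto
  have "uniformizer ^ t' \<noteq> 0" using not_less_Least[of t' "\<lambda>t. uniformizer ^ t = 0"] t' t_def by simp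
  moreover have "uniformizer ^ t' * uniformizer = 0" using t t' by (simp add: mult.commute)
  ultimately show ?thesis using power_in_R[OF uniformizer_in_R] by blast
qed

definition R_poly :: "'a poly \<Rightarrow> bool" where
  "R_poly f \<longleftrightarrow> (\<forall>i. coeff f i \<in> R)"

lemma R_poly_0: "R_poly 0"
  and R_poly_add: "R_poly f \<Longrightarrow> R_poly g \<Longrightarrow> R_poly (f + g)"
  and R_poly_diff: "R_poly f \<Longrightarrow> R_poly g \<Longrightarrow> R_poly (f - g)"
  and R_poly_monom: "c \<in> R \<Longrightarrow> R_poly (monom c n)"
  unfolding R_poly_def by (simp_all add: zero_in_R add_in_R diff_in_R)

lemma R_poly_mult: "R_poly f \<Longrightarrow> R_poly g \<Longrightarrow> R_poly (f * g)"
  unfolding R_poly_def coeff_mult by (auto intro!: sum_in_R mult_in_R)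

lemma R_poly_monic_division:
  assumes f: "R_poly f" "lead_coeff f = 1" and g: "R_poly g"
  shows "\<exists>q r. R_poly q \<and> R_poly r \<and> g = f * q + r \<and> (r = 0 \<or> degree r < degree f)"
  using g
proof (induction "degree g" arbitrary: g rule: less_induct)
  case less
  show ?case
  proof (cases "degree g < degree f")
    case True
    then show ?thesis using less.prems R_poly_0 by (intro exI[of _ 0] exI[of _ g]) auto
  next
    case False
    define m where "m = monom (lead_coeff g) (degree g - degree f)"
    define g' where "g' = g - m * f"
    have m: "R_poly m" unfolding m_def using less.prems by (intro R_poly_monom) (simp add: R_poly_def)
    have g': "R_poly g'" unfolding g'_def using less.prems f(1) m by (simp add: R_poly_diff R_poly_mult)
    have "coeff g' i = 0" if "i \<ge> degree g" for i
      using that False f(2) coeff_eq_0[of g i]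
      by (cases "i = degree g") (auto simp: g'_def m_def coeff_monom_mult coeff_eq_0)
    then have "g' = 0 \<or> degree g' < degree g"
      by (metis leading_coeff_0_iff linorder_not_le)
    then show ?thesis
    proof
      assume "g' = 0"
      then have "g = f * m + 0" unfolding g'_def by (simp add: mult.commute)
      then show ?thesis using m R_poly_0 by blast
    next
      assume "degree g' < degree g"
      then obtain q r where qr: "R_poly q" "R_poly r" "g' = f * q + r" "r = 0 \<or> degree r < degree f"
        using less.hyps g' by blast
      have "g = f * (q + m) + r" using qr(3) unfolding g'_def by (simp add: algebra_simps)
      then show ?thesis using qr R_poly_add m by blast
    qed
  qed
qed

lemma uniformizer_dvd_poly:
  "(\<And>i. coeff f i \<in> max_ideal R) \<Longrightarrow> uniformizer dvd poly f x"
  unfolding poly_altdef by (intro dvd_sum dvd_mult2 max_ideal_dvd)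

lemma monic_reduction:
  assumes f: "R_poly f" and k: "coeff f k \<notin> max_ideal R"
  obtains g v where "R_poly g" and "lead_coeff g = 1" and "degree g \<le> degree f"
    and "uniformizer dvd poly g x - v * poly f x"
proof -
  let ?K = "{i. coeff f i \<notin> max_ideal R}"
  have "?K \<subseteq> {..degree f}"
  proof
    fix i assume "i \<in> ?K"
    then have "coeff f i \<noteq> 0" using zero_in_max_ideal by auto
    then show "i \<in> {..degree f}" by (simp add: le_degree)
  qed
  then have finK: "finite ?K" by (rule finite_subset) simp
  define d where "d = Max ?K"
  have "d \<in> ?K" unfolding d_def using finK k by (intro Max_in) auto
  then have d: "coeff f d \<notin> max_ideal R" by simp
  have above: "coeff f i \<in> max_ideal R" if "d < i" for i
    using that finK Max_ge[OF finK, of i] unfolding d_def by fastforce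
  have "coeff f d \<in> R" using f unfolding R_poly_def by simp
  then obtain v where v: "v \<in> R" "coeff f d * v = 1" using d unit_if_notin_max_ideal by blast
  define g where "g = Polynomial.smult v (poly_cutoff (Suc d) f)"
  have cg: "coeff g i = (if i \<le> d then v * coeff f i else 0)" for i
    unfolding g_def by (simp add: coeff_poly_cutoff less_Suc_eq_le)
  have "degree g \<le> d" by (rule degree_le) (simp add: cg)
  moreover have "coeff g d = 1" using v by (simp add: cg mult.commute)
  ultimately have dg: "degree g = d" using le_degree[of g d] zero_neq_one by fastforce
  show ?thesis
  proof
    show "R_poly g" using f v by (simp add: R_poly_def cg mult_in_R zero_in_R)
    show "lead_coeff g = 1" using dg \<open>coeff g d = 1\<close> by simp
    have "coeff f d \<noteq> 0" using d zero_in_max_ideal by auto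
    then show "degree g \<le> degree f" using dg by (simp add: le_degree)
    have "\<forall>i. coeff (f - poly_cutoff (Suc d) f) i \<in> max_ideal R"
      using above zero_in_max_ideal by (simp add: coeff_poly_cutoff)
    then have "uniformizer dvd poly (f - poly_cutoff (Suc d) f) x"
      by (intro uniformizer_dvd_poly) blast
    moreover have "poly g x - v * poly f x = - v * poly (f - poly_cutoff (Suc d) f) x"
      unfolding g_def by (simp add: algebra_simps)
    ultimately show "uniformizer dvd poly g x - v * poly f x" by simp
  qed
qed

definition residue_class :: "'a \<Rightarrow> 'a set" where
  "residue_class r = (\<lambda>x. r + x) ` max_ideal R"

lemma residue_card_eq: "residue_card R = card (residue_class ` R)"
  unfolding residue_card_def residue_class_def ..

lemma residue_class_eq_iff: "residue_class x = residue_class y \<longleftrightarrow> x - y \<in> max_ideal R"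
proof
  assume "residue_class x = residue_class y"
  then have "x \<in> residue_class y"
    unfolding residue_class_def using zero_in_max_ideal by (metis add_0_right image_eqI)
  then show "x - y \<in> max_ideal R" unfolding residue_class_def by auto
next
  assume xy: "x - y \<in> max_ideal R"
  have "x + m = y + ((x - y) + m)" "y + m = x + (m - (x - y))" for m
    by simp_all
  then show "residue_class x = residue_class y"
    unfolding residue_class_def using xy max_ideal_add max_ideal_diff by blast
qed

lemma two_le_residue_card: "2 \<le> residue_card R"
proof -
  have "residue_class 0 \<noteq> residue_class 1"
    unfolding residue_class_eq_iff using max_ideal_diff[OF zero_in_max_ideal] one_notin_max_ideal
    by fastforce
  then have "card {residue_class 0, residue_class 1} = 2" by simp
  moreover have "{residue_class 0, residue_class 1} \<subseteq> residue_class ` R"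
    using zero_in_R one_in_R by blast
  ultimately show ?thesis
    unfolding residue_card_eq using finite_R by (metis card_mono finite_imageI)
qed

lemma residue_representatives:
  obtains T where "T \<subseteq> R" and "card T = residue_card R"
    and "\<And>x y. x \<in> T \<Longrightarrow> y \<in> T \<Longrightarrow> x \<noteq> y \<Longrightarrow> x - y \<notin> max_ideal R"
proof
  let ?rep = "inv_into R residue_class"
  show "?rep ` residue_class ` R \<subseteq> R" by (auto intro: inv_into_into)
  have "inj_on ?rep (residue_class ` R)" by (rule inj_on_inv_into) simp
  then show "card (?rep ` residue_class ` R) = residue_card R"
    unfolding residue_card_eq by (rule card_image)
  fix x y assume "x \<in> ?rep ` residue_class ` R" "y \<in> ?rep ` residue_class ` R" "x \<noteq> y"
  then obtain a b where "a \<in> R" "b \<in> R" "x = ?rep (residue_class a)" "y = ?rep (residue_class b)"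
    by blast
  moreover from this have "residue_class x = residue_class a" "residue_class y = residue_class b"
    by (simp_all add: f_inv_into_f)
  ultimately show "x - y \<notin> max_ideal R" using \<open>x \<noteq> y\<close> by (metis residue_class_eq_iff)
qed

end

section \<open>The Galois extension \<open>S\<close> modulo a uniformizer\<close>

locale galois_ext =
  fixes R :: "'a::comm_ring_1 set" and h :: "'a poly" and \<theta> :: 'a and \<sigma> :: "'a \<Rightarrow> 'a"
  assumes setting: "galois_setting R h \<theta> \<sigma>"

sublocale galois_ext \<subseteq> fin_chain_ring R
  using setting unfolding galois_setting_def by unfold_locales blast

context galois_ext
begin

lemma presentation: "presentation R h \<theta>" and irreducible: "irreducible_mod R h"
  and frobenius: "\<sigma> y - y ^ residue_card R \<in> ext_ideal (max_ideal R)"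
  using setting by (simp_all add: galois_setting_def)

lemma \<sigma>_fixes_R: "r \<in> R \<Longrightarrow> \<sigma> r = r"
  using setting by (simp add: galois_setting_def galois_group_def)

lemma \<sigma>_hom: "comm_ring_hom \<sigma>"
proof -
  have aut: "ring_aut \<sigma>" using setting by (simp add: galois_setting_def galois_group_def)
  then have add: "\<sigma> (x + y) = \<sigma> x + \<sigma> y" for x y by (simp add: ring_aut_def)
  have "\<sigma> 0 = 0" using add[of 0 0] by simp
  then show ?thesis using aut by unfold_locales (simp_all add: ring_aut_def)
qed

lemma ext_ideal_dvd:
  assumes "x \<in> ext_ideal (max_ideal R)"
  shows "uniformizer dvd x"
proof -
  have "\<exists>(k::nat) f g. (\<forall>i<k. f i \<in> max_ideal R) \<and> x = (\<Sum>i<k. f i * g i)"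
    using assms by (simp add: ext_ideal_def)
  then obtain k :: nat and f g where fg: "\<forall>i<k. f i \<in> max_ideal R" "x = (\<Sum>i<k. f i * g i)"
    by blast
  have "uniformizer dvd f i * g i" if "i < k" for i
    using fg(1) that by (simp add: max_ideal_dvd)
  then show ?thesis unfolding fg(2) by (intro dvd_sum) simp
qed

lemma uniformizer_not_dvd_one: "\<not> uniformizer dvd 1"
proof -
  obtain t where "uniformizer ^ t = 0" using uniformizer_nilpotent ..
  then show ?thesis using not_dvd_one_if_nilpotent zero_neq_one by blast
qed

lemma one_minus_multiple_unit:
  assumes "uniformizer dvd e"
  shows "(1 - e) dvd 1"
proof -
  obtain w where "e = uniformizer * w" using assms by (rule dvdE)
  moreover obtain t where "uniformizer ^ t = 0" using uniformizer_nilpotent by blast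
  ultimately have "e ^ t = 0" by (simp add: power_mult_distrib)
  then show ?thesis by (rule one_minus_nilpotent_unit)
qed

lemma uniformizer_dvd_iff_max_ideal:
  assumes "x \<in> R"
  shows "uniformizer dvd x \<longleftrightarrow> x \<in> max_ideal R"
proof
  assume dvd: "uniformizer dvd x"
  show "x \<in> max_ideal R"
  proof (rule ccontr)
    assume "x \<notin> max_ideal R"
    then obtain u where "x * u = 1" using unit_if_notin_max_ideal assms by blast
    then have "uniformizer dvd 1" using dvd dvd_mult2 by metis
    then show False using uniformizer_not_dvd_one by contradiction
  qed
qed (rule max_ideal_dvd)

lemma R_poly_h: "R_poly h" and monic_h: "lead_coeff h = 1" and root_h: "poly h \<theta> = 0"
  using presentation unfolding presentation_def R_poly_def by auto

lemma presentation_poly: "\<exists>f. R_poly f \<and> degree f < degree h \<and> poly f \<theta> = y"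
proof -
  obtain c where c: "\<forall>i. c i \<in> R" "\<forall>i\<ge>degree h. c i = 0" "y = (\<Sum>i<degree h. c i * \<theta> ^ i)"
    using presentation unfolding presentation_def by blast
  define f where "f = (\<Sum>i<degree h. monom (c i) i)"
  have cf: "coeff f j = c j" for j
    using c(2) by (cases "j < degree h") (simp_all add: f_def coeff_sum)
  have "degree h \<ge> 1" using irreducible unfolding irreducible_mod_def by simp
  moreover have "degree f \<le> degree h - 1" by (rule degree_le) (use cf c(2) in auto)
  ultimately have "degree f < degree h" by simp
  moreover have "poly f \<theta> = y" unfolding f_def c(3) poly_sum poly_monom by simp
  moreover have "R_poly f" unfolding R_poly_def cf using c(1) by simp
  ultimately show ?thesis by blast
qed

lemma finite_S: "finite (UNIV :: 'a set)"
proof -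
  let ?F = "{c. \<forall>i. (i \<in> {..<degree h} \<longrightarrow> c i \<in> R) \<and> (i \<notin> {..<degree h} \<longrightarrow> c i = 0)}"
  have "finite ?F" by (rule finite_set_of_finite_funs) (use finite_R in auto)
  moreover have "UNIV \<subseteq> (\<lambda>c. \<Sum>i<degree h. c i * \<theta> ^ i) ` ?F"
  proof
    fix y :: 'a
    obtain c where "\<forall>i. c i \<in> R" "\<forall>i\<ge>degree h. c i = 0" "y = (\<Sum>i<degree h. c i * \<theta> ^ i)"
      using presentation unfolding presentation_def by blast
    then show "y \<in> (\<lambda>c. \<Sum>i<degree h. c i * \<theta> ^ i) ` ?F"
      by (intro image_eqI[where x = c]) auto
  qed
  ultimately show ?thesis by (rule finite_surj)
qed

definition monic_annihilator :: "'a \<Rightarrow> 'a poly \<Rightarrow> bool" where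
  "monic_annihilator z f \<longleftrightarrow> R_poly f \<and> lead_coeff f = 1 \<and> uniformizer dvd poly f \<theta> * z"

lemma monic_annihilator_reduce:
  assumes g: "R_poly g" and gz: "uniformizer dvd poly g \<theta> * z" and k: "coeff g k \<notin> max_ideal R"
  obtains f where "monic_annihilator z f" and "degree f \<le> degree g"
proof -
  obtain f v where f: "R_poly f" "lead_coeff f = 1" "degree f \<le> degree g"
    and fv: "uniformizer dvd poly f \<theta> - v * poly g \<theta>"
    using monic_reduction[OF g k, where x = \<theta>] by blast
  have "poly f \<theta> * z = (poly f \<theta> - v * poly g \<theta>) * z + v * (poly g \<theta> * z)"
    by (simp add: algebra_simps)
  then have "uniformizer dvd poly f \<theta> * z" using fv gz by simp
  then show ?thesis using that f unfolding monic_annihilator_def by blast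
qed

text \<open>A monic annihilator of least degree divides \<open>h\<close> modulo the maximal ideal of \<open>R\<close>;
  irreducibility of \<open>h\<close> modulo that ideal leaves no room for one of smaller degree than \<open>h\<close>.\<close>

lemma monic_annihilator_degree:
  assumes f: "monic_annihilator z f" and z: "\<not> uniformizer dvd z"
  shows "degree h \<le> degree f"
proof (rule ccontr)
  assume deg_f: "\<not> degree h \<le> degree f"
  obtain f0 where f0: "monic_annihilator z f0"
    and least: "\<And>g. monic_annihilator z g \<Longrightarrow> degree f0 \<le> degree g"
    using ex_has_least_nat[of "monic_annihilator z" f degree] f by blast
  have f0R: "R_poly f0" and lc: "lead_coeff f0 = 1" and f0z: "uniformizer dvd poly f0 \<theta> * z"
    using f0 unfolding monic_annihilator_def by auto
  have deg_f0: "degree f0 < degree h" using least[OF f] deg_f by simp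
  have "degree f0 \<noteq> 0"
  proof
    assume "degree f0 = 0"
    then have "f0 = 1" using lc by (metis one_poly_eq_simps(1) degree_eq_zeroE coeff_pCons_0)
    then show False using f0z z by simp
  qed
  obtain q r where qr: "R_poly q" "R_poly r" "h = f0 * q + r" "r = 0 \<or> degree r < degree f0"
    using R_poly_monic_division[OF f0R lc R_poly_h] by blast
  have "poly r \<theta> * z = - (poly f0 \<theta> * z * poly q \<theta>)"
    using arg_cong[OF qr(3), of "\<lambda>p. poly p \<theta> * z"] root_h
    by (simp add: algebra_simps eq_neg_iff_add_eq_0)
  then have rz: "uniformizer dvd poly r \<theta> * z" using f0z by simp
  have r_max: "\<forall>i. coeff r i \<in> max_ideal R"
  proof (rule ccontr)
    assume "\<not> (\<forall>i. coeff r i \<in> max_ideal R)"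
    then obtain k where k: "coeff r k \<notin> max_ideal R" by blast
    then have "r \<noteq> 0" using zero_in_max_ideal by auto
    obtain g where "monic_annihilator z g" and "degree g \<le> degree r"
      using monic_annihilator_reduce[OF qr(2) rz k] by blast
    then show False using least qr(4) \<open>r \<noteq> 0\<close> by fastforce
  qed
  have "lead_coeff q = 1" and "degree h = degree f0 + degree q"
    using monic_quotient[OF _ lc monic_h qr(3,4)] zero_neq_one deg_f0 by auto
  then have "\<exists>f g. (\<forall>i. coeff f i \<in> R) \<and> (\<forall>i. coeff g i \<in> R) \<and>
      lead_coeff f = 1 \<and> lead_coeff g = 1 \<and> degree f \<ge> 1 \<and> degree g \<ge> 1 \<and>
      (\<forall>i. coeff (h - f * g) i \<in> max_ideal R)"
    using f0R qr lc deg_f0 \<open>degree f0 \<noteq> 0\<close> r_max unfolding R_poly_def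
    by (intro exI[of _ f0] exI[of _ q]) simp
  then show False using irreducible unfolding irreducible_mod_def by blast
qed

lemma uniformizer_dvd_mult_cancel:
  assumes yz: "uniformizer dvd y * z" and z: "\<not> uniformizer dvd z"
  shows "uniformizer dvd y"
proof -
  obtain g where g: "R_poly g" "degree g < degree h" "poly g \<theta> = y"
    using presentation_poly by blast
  have "coeff g k \<in> max_ideal R" for k
  proof (rule ccontr)
    assume "coeff g k \<notin> max_ideal R"
    then obtain f where "monic_annihilator z f" and "degree f \<le> degree g"
      using monic_annihilator_reduce[OF g(1)] yz g(3) by blast
    then show False using monic_annihilator_degree[OF _ z] g(2) by fastforce
  qed
  then show ?thesis using uniformizer_dvd_poly g(3) by blast
qed

lemma uniformizer_not_dvd_power: "\<not> uniformizer dvd y \<Longrightarrow> \<not> uniformizer dvd y ^ k"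
  by (induction k) (auto simp: uniformizer_not_dvd_one dest: uniformizer_dvd_mult_cancel)

lemma unit_if_not_uniformizer_dvd:
  assumes y: "\<not> uniformizer dvd y"
  shows "y dvd 1"
proof -
  obtain i d where d: "0 < d" "y ^ (i + d) = y ^ i"
    using power_eq_power_shift[OF finite_S] by blast
  have "(1 - y ^ d) * y ^ i = 0" using d(2) by (simp add: algebra_simps power_add)
  then have "uniformizer dvd 1 - y ^ d"
    using uniformizer_dvd_mult_cancel uniformizer_not_dvd_power[OF y] by (metis dvd_0_right)
  then have "(1 - (1 - y ^ d)) dvd 1" by (rule one_minus_multiple_unit)
  moreover have "y dvd y ^ d" using d(1) by simp
  ultimately show ?thesis by (simp add: dvd_trans)
qed

lemma frobenius_root:
  assumes "uniformizer dvd \<sigma> x - x"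
  shows "uniformizer dvd x ^ residue_card R - x"
proof -
  have "uniformizer dvd (\<sigma> x - x) - (\<sigma> x - x ^ residue_card R)"
    using dvd_diff[OF assms ext_ideal_dvd[OF frobenius]] .
  then show ?thesis by simp
qed

lemma residue_representatives_incongruent:
  obtains T where "T \<subseteq> R" and "card T = residue_card R"
    and "\<forall>x\<in>T. \<forall>y\<in>T. x \<noteq> y \<longrightarrow> \<not> uniformizer dvd x - y"
proof -
  obtain T where T: "T \<subseteq> R" "card T = residue_card R"
    and distinct: "\<And>x y. x \<in> T \<Longrightarrow> y \<in> T \<Longrightarrow> x \<noteq> y \<Longrightarrow> x - y \<notin> max_ideal R"
    using residue_representatives by blast
  have "\<not> uniformizer dvd x - y" if "x \<in> T" "y \<in> T" "x \<noteq> y" for x y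
    using distinct[OF that] uniformizer_dvd_iff_max_ideal diff_in_R that T(1) by blast
  with T that show ?thesis by blast
qed

text \<open>\<open>X\<^sup>q - X\<close> has at most \<open>q\<close> pairwise incongruent roots modulo the uniformizer, yet by the
  Frobenius condition it vanishes on \<open>q\<close> incongruent representatives of \<open>R\<close> and on every \<open>\<delta>\<close>
  fixed by \<open>\<sigma>\<close> modulo the uniformizer; so such a \<open>\<delta>\<close> is congruent to one of them.\<close>

lemma fixed_mod_lift:
  assumes fixed: "uniformizer dvd \<sigma> \<delta> - \<delta>"
  shows "\<exists>r\<in>R. uniformizer dvd \<delta> - r"
proof (rule ccontr)
  assume far: "\<not> (\<exists>r\<in>R. uniformizer dvd \<delta> - r)"
  obtain T where T: "T \<subseteq> R" "card T = residue_card R"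
    and T_incongruent: "\<forall>x\<in>T. \<forall>y\<in>T. x \<noteq> y \<longrightarrow> \<not> uniformizer dvd x - y"
    by (rule residue_representatives_incongruent)
  let ?f = "monom 1 (residue_card R) - monom (1::'a) 1"
  have fin: "finite (insert \<delta> T)" using finite_subset[OF T(1) finite_R] by simp
  have "\<delta> \<notin> T" using far T(1) by (metis diff_self dvd_0_right subsetD)
  then have "card (insert \<delta> T) = Suc (residue_card R)" using T fin by simp
  moreover have "card (insert \<delta> T) \<le> degree ?f"
  proof (rule card_incongruent_roots_le[OF uniformizer_dvd_mult_cancel uniformizer_not_dvd_one
        monic_X_power_minus_X(1)[OF two_le_residue_card zero_neq_one[symmetric]] fin])
    have "\<not> uniformizer dvd \<delta> - r" "\<not> uniformizer dvd r - \<delta>" if "r \<in> T" for r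
      using far T(1) that by (auto simp: dvd_diff_commute[of _ r])
    then show "\<forall>x\<in>insert \<delta> T. \<forall>y\<in>insert \<delta> T. x \<noteq> y \<longrightarrow> \<not> uniformizer dvd x - y"
      using T_incongruent by blast
    have "uniformizer dvd \<sigma> x - x" if "x \<in> insert \<delta> T" for x
      using that fixed T(1) \<sigma>_fixes_R by auto
    then show "\<forall>x\<in>insert \<delta> T. uniformizer dvd poly ?f x"
      by (simp add: poly_monom frobenius_root)
  qed
  ultimately show False
    using monic_X_power_minus_X(2)[OF two_le_residue_card zero_neq_one[symmetric]] by simp
qed

lemma R_lin_indep_mod_uniformizer:
  assumes indep: "R_lin_indep R k \<beta>"
  shows "R_lin_indep_mod R uniformizer {1..k} \<beta>"
  unfolding R_lin_indep_mod_def
proof (intro allI impI ballI)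
  fix c j
  assume c: "\<forall>j\<in>{1..k}. c j \<in> R" and dvd: "uniformizer dvd (\<Sum>j\<in>{1..k}. c j * \<beta> j)"
    and j: "j \<in> {1..k}"
  obtain e where e: "e \<in> R" "e \<noteq> 0" "e * uniformizer = 0" using uniformizer_annihilator by blast
  obtain w where w: "(\<Sum>j\<in>{1..k}. c j * \<beta> j) = uniformizer * w" using dvd by (rule dvdE)
  have "(\<Sum>j=1..k. (e * c j) * \<beta> j) = e * (\<Sum>j=1..k. c j * \<beta> j)"
    by (simp add: sum_distrib_left mult.assoc)
  also have "\<dots> = e * uniformizer * w" unfolding w by (simp add: mult.assoc)
  also have "\<dots> = 0" using e(3) by simp
  finally have "(\<Sum>j=1..k. (e * c j) * \<beta> j) = 0" .
  moreover have "\<forall>j\<in>{1..k}. e * c j \<in> R" using c e(1) mult_in_R by blast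
  ultimately have "\<forall>j\<in>{1..k}. e * c j = 0"
    using indep[unfolded R_lin_indep_def, rule_format, of "\<lambda>j. e * c j"] by blast
  then have ecj: "e * c j = 0" using j by blast
  have "c j \<in> max_ideal R"
  proof (rule ccontr)
    assume "c j \<notin> max_ideal R"
    then obtain u where "c j * u = 1" using unit_if_notin_max_ideal c j by blast
    then have "e = e * c j * u" by (simp add: mult.assoc)
    then show False using ecj e(2) by simp
  qed
  then show "uniformizer dvd c j" by (rule max_ideal_dvd)
qed

sublocale res: residue_galois \<sigma> R uniformizer
proof (rule residue_galois.intro[OF \<sigma>_hom], unfold_locales)
  show "\<And>r. r \<in> R \<Longrightarrow> \<sigma> r = r" by (rule \<sigma>_fixes_R)
  show "0 \<in> R" "1 \<in> R" "\<And>r. r \<in> R \<Longrightarrow> - r \<in> R" by (simp_all add: zero_in_R one_in_R uminus_in_R)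
  show "\<not> uniformizer dvd 1" by (rule uniformizer_not_dvd_one)
  show "\<And>x. \<not> uniformizer dvd x \<Longrightarrow> x dvd 1" by (rule unit_if_not_uniformizer_dvd)
  show "\<And>x. uniformizer dvd \<sigma> x - x \<Longrightarrow> \<exists>r\<in>R. uniformizer dvd x - r" by (rule fixed_mod_lift)
qed

end

section \<open>Matrices that are invertible modulo a local parameter\<close>

lemma prod_diff_dvd:
  fixes f g :: "'b \<Rightarrow> 'a::comm_ring_1"
  shows "(\<And>i. i \<in> S \<Longrightarrow> p dvd f i - g i) \<Longrightarrow> p dvd prod f S - prod g S"
proof (induction S rule: infinite_finite_induct)
  case (insert a S)
  have "prod f (insert a S) - prod g (insert a S) = (prod f S - prod g S) * f a + (f a - g a) * prod g S"
    using insert.hyps by (simp add: algebra_simps)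
  then show ?case using insert by simp
qed simp_all

lemma det_diff_dvd:
  assumes A: "A \<in> carrier_mat n n" and B: "B \<in> carrier_mat n n"
    and entries: "\<And>i j. i < n \<Longrightarrow> j < n \<Longrightarrow> p dvd A $$ (i, j) - B $$ (i, j)"
  shows "p dvd det A - det B"
proof -
  have "det A - det B = (\<Sum>\<pi> | \<pi> permutes {0..<n}.
      signof \<pi> * ((\<Prod>i = 0..<n. A $$ (i, \<pi> i)) - (\<Prod>i = 0..<n. B $$ (i, \<pi> i))))"
    unfolding det_def'[OF A] det_def'[OF B] sum_subtractf[symmetric] by (simp add: right_diff_distrib)
  also have "p dvd \<dots>"
  proof (intro dvd_sum dvd_mult prod_diff_dvd)
    fix \<pi> i assume "\<pi> \<in> {\<pi>. \<pi> permutes {0..<n}}" and i: "i \<in> {0..<n}"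
    then have "\<pi> i < n" using permutes_in_image by fastforce
    then show "p dvd A $$ (i, \<pi> i) - B $$ (i, \<pi> i)" using entries i by simp
  qed
  finally show ?thesis .
qed

lemma invertible_mat_if_det_unit:
  fixes A :: "'a::comm_ring_1 mat"
  assumes A: "A \<in> carrier_mat n n" and "det A dvd 1"
  shows "invertible_mat A"
proof -
  obtain d where d: "det A * d = 1" using assms(2) by (metis dvdE)
  define B where "B = d \<cdot>\<^sub>m adj_mat A"
  have adj: "adj_mat A \<in> carrier_mat n n" "A * adj_mat A = det A \<cdot>\<^sub>m 1\<^sub>m n" "adj_mat A * A = det A \<cdot>\<^sub>m 1\<^sub>m n"
    using adj_mat[OF A] by auto
  have one: "d \<cdot>\<^sub>m (det A \<cdot>\<^sub>m 1\<^sub>m n) = 1\<^sub>m n"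
    by (rule eq_matI) (use d in \<open>auto simp: mult.commute\<close>)
  have "A * B = 1\<^sub>m n" unfolding B_def using mult_smult_distrib[OF A adj(1)] adj(2) one by simp
  moreover have "B * A = 1\<^sub>m n" unfolding B_def using mult_smult_assoc_mat[OF adj(1) A] adj(3) one by simp
  ultimately show ?thesis
    unfolding invertible_mat_def inverts_mat_def using A adj(1) unfolding B_def by auto
qed

definition mod_rep :: "'a::comm_ring_1 \<Rightarrow> 'a \<Rightarrow> 'a" where
  "mod_rep p x = (SOME r. p dvd x - r)"

lemma dvd_diff_mod_rep: "p dvd x - mod_rep p x"
  unfolding mod_rep_def by (rule someI[of _ x]) simp

lemma mod_rep_eq_iff: "mod_rep p x = mod_rep p y \<longleftrightarrow> p dvd x - y"
proof
  assume eq: "mod_rep p x = mod_rep p y"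
  have "p dvd (x - mod_rep p x) - (y - mod_rep p y)"
    by (rule dvd_diff) (rule dvd_diff_mod_rep)+
  then show "p dvd x - y" by (simp add: eq)
next
  assume xy: "p dvd x - y"
  have "(\<lambda>r. p dvd x - r) = (\<lambda>r. p dvd y - r)"
  proof
    fix r
    show "p dvd x - r \<longleftrightarrow> p dvd y - r"
    proof
      assume "p dvd x - r"
      from dvd_diff[OF this xy] show "p dvd y - r" by simp
    next
      assume "p dvd y - r"
      from dvd_add[OF xy this] show "p dvd x - r" by simp
    qed
  qed
  then show "mod_rep p x = mod_rep p y" unfolding mod_rep_def by simp
qed

lemma mod_rep_idem: "mod_rep p (mod_rep p x) = mod_rep p x"
  unfolding mod_rep_eq_iff by (rule dvd_diff_commute[THEN iffD1, OF dvd_diff_mod_rep])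

text \<open>On the finite set of vectors of canonical representatives modulo \<open>p\<close>, the map induces an
  injective, hence bijective, self-map.\<close>

lemma surj_mod_if_inj_mod:
  fixes f :: "(nat \<Rightarrow> 'a::comm_ring_1) \<Rightarrow> nat \<Rightarrow> 'a"
  assumes fin: "finite (UNIV :: 'a set)"
    and inj: "\<And>y w. \<forall>c<N. p dvd f y c - f w c \<Longrightarrow> \<forall>s<N. p dvd y s - w s"
  shows "\<exists>y. \<forall>c<N. p dvd f y c - t c"
proof -
  define V where "V = (\<Pi>\<^sub>E s\<in>{..<N}. range (mod_rep p))"
  define g where "g y = restrict (\<lambda>c. mod_rep p (f y c)) {..<N}" for y
  have canonical: "mod_rep p (z s) = z s" if "z \<in> V" and "s < N" for z s
  proof -
    have "z s \<in> range (mod_rep p)" using PiE_mem[OF that(1)[unfolded V_def]] that(2) by simp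
    then obtain x where "z s = mod_rep p x" by blast
    then show ?thesis by (simp add: mod_rep_idem)
  qed
  have g_V: "g ` V \<subseteq> V" unfolding g_def V_def by (simp add: restrict_PiE_iff image_subset_iff)
  have "inj_on g V"
  proof (rule inj_onI)
    fix y w assume y: "y \<in> V" and w: "w \<in> V" and "g y = g w"
    have "mod_rep p (f y c) = mod_rep p (f w c)" if "c < N" for c
      using fun_cong[OF \<open>g y = g w\<close>, of c] that by (simp add: g_def)
    then have "\<forall>c<N. p dvd f y c - f w c" by (simp add: mod_rep_eq_iff)
    then have "\<forall>s<N. p dvd y s - w s" by (rule inj)
    then have "\<forall>s<N. mod_rep p (y s) = mod_rep p (w s)" by (simp add: mod_rep_eq_iff)
    then have "\<forall>s<N. y s = w s" using canonical y w by metis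
    then show "y = w"
      using PiE_ext[OF y[unfolded V_def] w[unfolded V_def]] by simp
  qed
  then have "g ` V = V" using endo_inj_surj[OF _ g_V] fin unfolding V_def by (simp add: finite_PiE)
  moreover have "restrict (\<lambda>c. mod_rep p (t c)) {..<N} \<in> V" unfolding V_def by simp
  ultimately obtain y where y: "g y = restrict (\<lambda>c. mod_rep p (t c)) {..<N}"
    by (metis imageE)
  have "mod_rep p (f y c) = mod_rep p (t c)" if "c < N" for c
    using fun_cong[OF y, of c] that by (simp add: g_def)
  then show ?thesis by (auto simp: mod_rep_eq_iff)
qed

lemma invertible_mat_if_inj_mod:
  fixes M :: "'a::comm_ring_1 mat"
  assumes fin: "finite (UNIV :: 'a set)" and M: "M \<in> carrier_mat N N"
    and not_dvd_one: "\<not> p dvd 1" and unit: "\<And>x. \<not> p dvd x \<Longrightarrow> x dvd 1"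
    and inj: "\<And>y. \<forall>c<N. p dvd (\<Sum>s<N. y s * M $$ (s, c)) \<Longrightarrow> \<forall>s<N. p dvd y s"
  shows "invertible_mat M"
proof -
  have "\<exists>y. \<forall>c<N. p dvd (\<Sum>s<N. y s * M $$ (s, c)) - (if r = c then 1 else 0)" for r
  proof (rule surj_mod_if_inj_mod[OF fin])
    fix y w :: "nat \<Rightarrow> 'a"
    assume "\<forall>c<N. p dvd (\<Sum>s<N. y s * M $$ (s, c)) - (\<Sum>s<N. w s * M $$ (s, c))"
    then have "\<forall>c<N. p dvd (\<Sum>s<N. (y s - w s) * M $$ (s, c))"
      by (simp add: left_diff_distrib sum_subtractf)
    then show "\<forall>s<N. p dvd y s - w s" by (rule inj)
  qed
  then obtain Y where Y: "\<And>r c. c < N \<Longrightarrow> p dvd (\<Sum>s<N. Y r s * M $$ (s, c)) - (if r = c then 1 else 0)"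
    by metis
  define Ym where "Ym = mat N N (\<lambda>(r, s). Y r s)"
  have Ym: "Ym \<in> carrier_mat N N" unfolding Ym_def by simp
  have "p dvd det (Ym * M) - det (1\<^sub>m N)"
  proof (rule det_diff_dvd)
    show "Ym * M \<in> carrier_mat N N" using Ym M by simp
    fix i j assume "i < N" "j < N"
    then show "p dvd (Ym * M) $$ (i, j) - 1\<^sub>m N $$ (i, j)"
      using Y[of j i] M by (simp add: Ym_def scalar_prod_def atLeast0LessThan)
  qed simp
  then have YM: "p dvd det Ym * det M - 1" using det_mult[OF Ym M] by simp
  have "\<not> p dvd det M"
  proof
    assume "p dvd det M"
    then have "p dvd det Ym * det M - (det Ym * det M - 1)"
      by (intro dvd_diff YM dvd_mult)
    then show False using not_dvd_one by simp
  qed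
  then show ?thesis by (rule invertible_mat_if_det_unit[OF M unit])
qed

lemma set_col_labels: "set (col_labels l n) = Sigma {1..l} (\<lambda>i. {1..n i})"
  unfolding col_labels_def by (auto simp del: upt_Suc simp add: atLeastLessThanSuc_atLeastAtMost)

lemma length_col_labels: "length (col_labels l n) = (\<Sum>i=1..l. n i)"
proof -
  have "length (col_labels l n) = sum_list (map n [1..<Suc l])"
    unfolding col_labels_def length_concat by (simp add: comp_def del: upt_Suc)
  also have "\<dots> = (\<Sum>i=1..l. n i)"
    by (simp add: sum_set_upt_conv_sum_list_nat[symmetric] atLeastLessThanSuc_atLeastAtMost
        del: upt_Suc)
  finally show ?thesis .
qed

lemma Mmat_carrier: "Mmat \<sigma> l n a \<beta> \<in> carrier_mat (\<Sum>i=1..l. n i) (\<Sum>i=1..l. n i)"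
  unfolding Mmat_def Let_def by simp

lemma Mmat_column_sums:
  assumes "\<forall>c<(\<Sum>i=1..l. n i). p dvd (\<Sum>s<(\<Sum>i=1..l. n i). y s * Mmat \<sigma> l n a \<beta> $$ (s, c))"
    and "k \<in> Sigma {1..l} (\<lambda>i. {1..n i})"
  shows "p dvd (\<Sum>s<(\<Sum>i=1..l. n i). y s * Dop \<sigma> (a (fst k)) s (\<beta> (fst k) (snd k)))"
proof -
  obtain c where c: "c < (\<Sum>i=1..l. n i)" "col_labels l n ! c = k"
    using assms(2) length_col_labels by (metis in_set_conv_nth set_col_labels)
  have "Mmat \<sigma> l n a \<beta> $$ (s, c) = Dop \<sigma> (a (fst k)) s (\<beta> (fst k) (snd k))"
    if "s < (\<Sum>i=1..l. n i)" for s
    using that c unfolding Mmat_def Let_def by (simp split: prod.split)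
  then show ?thesis using assms(1) c(1) by (metis (no_types, lifting) lessThan_iff sum.cong)
qed

theorem theorem3:
  fixes R :: "'a::comm_ring_1 set" and h :: "'a poly" and \<theta> :: 'a and \<sigma> :: "'a \<Rightarrow> 'a"
    and l :: nat and n :: "nat \<Rightarrow> nat" and a :: "nat \<Rightarrow> 'a" and \<beta> :: "nat \<Rightarrow> nat \<Rightarrow> 'a"
  assumes setting: "galois_setting R h \<theta> \<sigma>"
    and n_pos: "\<forall>i\<in>{1..l}. n i \<ge> 1"
    and a_units: "\<forall>i\<in>{1..l}. a i dvd 1"
    and cond_i: "\<forall>i j b. 1 \<le> i \<and> i < j \<and> j \<le> l \<and> b dvd 1 \<longrightarrow> (a i - twist \<sigma> (a j) b) dvd 1"
    and cond_ii: "\<forall>i\<in>{1..l}. R_lin_indep R (n i) (\<beta> i)"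
  shows "invertible_mat (Mmat \<sigma> l n a \<beta>)"
proof -
  interpret galois_ext R h \<theta> \<sigma> by (rule galois_ext.intro[OF setting])
  define P where "P = Sigma {1..l} (\<lambda>i. {1..n i})"
  have "\<forall>i\<in>{1..l}. R_lin_indep_mod R uniformizer {1..n i} (\<beta> i)"
    using cond_ii R_lin_indep_mod_uniformizer by blast
  from R_lin_indep_mod_blocks[OF this inj_on_if_twist_units[OF \<sigma>_hom zero_neq_one cond_i]]
  have indep: "\<forall>\<alpha>. R_lin_indep_mod R uniformizer {k \<in> P. a (fst k) = \<alpha>} (\<lambda>k. \<beta> (fst k) (snd k))"
    unfolding P_def by (rule allI)
  show ?thesis
  proof (rule invertible_mat_if_inj_mod[OF finite_S Mmat_carrier
        uniformizer_not_dvd_one unit_if_not_uniformizer_dvd])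
    fix y
    assume columns: "\<forall>c<(\<Sum>i=1..l. n i).
      uniformizer dvd (\<Sum>s<(\<Sum>i=1..l. n i). y s * Mmat \<sigma> l n a \<beta> $$ (s, c))"
    show "\<forall>s<(\<Sum>i=1..l. n i). uniformizer dvd y s"
    proof (rule res.Dop_kernel_mod[where C = P, OF _ _ _ _ indep])
      show "finite P" and "card P = (\<Sum>i=1..l. n i)" unfolding P_def by simp_all
      show "\<forall>k\<in>P. a (fst k) dvd 1" using a_units unfolding P_def by auto
      show "\<forall>k\<in>P. \<forall>k'\<in>P. a (fst k) \<noteq> a (fst k') \<longrightarrow>
          (\<forall>b. b dvd 1 \<longrightarrow> (a (fst k) - twist \<sigma> (a (fst k')) b) dvd 1)"
        unfolding P_def by (rule twist_units_blocks[OF \<sigma>_hom cond_i])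
      show "\<forall>k\<in>P. uniformizer dvd (\<Sum>s<(\<Sum>i=1..l. n i). y s * Dop \<sigma> (a (fst k)) s (\<beta> (fst k) (snd k)))"
        unfolding P_def using Mmat_column_sums[OF columns] by blast
    qed
  qed
qed

end
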